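(* Let $1<p<\infty$, $n\ge1$, and let $f\in C([0,\infty))$, $g\in C^{0,1}([0,\infty))$ be strictly increasing with $f(0)=g(0)=0$; let $F(s)=\int_0^s f(t)\,dt$. Suppose that $$\int_1^\infty\frac{ds}{F(s)^{1/p}}<+\infty\qquad\text{or}\qquad\int_1^\infty\frac{s^{p-2}\,ds}{g(s)}<+\infty.$$ Let $v$ be any solution of $$\big(r^{n-1}(v')^{p-1}\big)'=r^{n-1}\big(f(v)+g(v')\big),\qquad v(0)=v_0>0,\quad v'(0)=0.$$ Then: (i) $v$ exists on a maximal interval $(0,R)$ with $0<R<\infty$, and $v'(r)\to\infty$ as $r\to R$; (ii) moreover, $v(r)\to\infty$ as $r\to R$ if and only if $\displaystyle\int_1^\infty\frac{s^{p-1}}{g(s)}\,ds=\infty$. *)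

theory Defs
  imports "HOL-Analysis.Analysis"
begin

definition ivl0 :: "ereal \<Rightarrow> real set" where
  "ivl0 R = {r. 0 \<le> r \<and> ereal r < R}"

definition prim :: "(real \<Rightarrow> real) \<Rightarrow> real \<Rightarrow> real" where
  "prim f s = integral {0..s} f"

text \<open>(v, v') is a C^1 solution on [0,R) of
  (r^(n-1) (v')^(p-1))' = r^(n-1) (f(v) + g(v')), v(0)=v0, v'(0)=0.
  Since f and g are only given on [0,oo), we require v' \<ge> 0 (hence v \<ge> v0 > 0).\<close>
definition is_sol ::
  "real \<Rightarrow> nat \<Rightarrow> (real \<Rightarrow> real) \<Rightarrow> (real \<Rightarrow> real) \<Rightarrow> real \<Rightarrow> ereal
     \<Rightarrow> (real \<Rightarrow> real) \<Rightarrow> (real \<Rightarrow> real) \<Rightarrow> bool" where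
  "is_sol p n f g v0 R v v' \<longleftrightarrow>
     0 < R \<and>
     (\<forall>r\<in>ivl0 R. (v has_real_derivative v' r) (at r within ivl0 R)) \<and>
     continuous_on (ivl0 R) v' \<and>
     v 0 = v0 \<and> v' 0 = 0 \<and>
     (\<forall>r\<in>ivl0 R. 0 \<le> v' r) \<and>
     (\<forall>r\<in>ivl0 R. 0 < r \<longrightarrow>
        ((\<lambda>s. s ^ (n - 1) * (v' s) powr (p - 1)) has_real_derivative
           r ^ (n - 1) * (f (v r) + g (v' r))) (at r))"

definition is_max_sol ::
  "real \<Rightarrow> nat \<Rightarrow> (real \<Rightarrow> real) \<Rightarrow> (real \<Rightarrow> real) \<Rightarrow> real \<Rightarrow> ereal
     \<Rightarrow> (real \<Rightarrow> real) \<Rightarrow> (real \<Rightarrow> real) \<Rightarrow> bool" where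
  "is_max_sol p n f g v0 R v v' \<longleftrightarrow>
     is_sol p n f g v0 R v v' \<and>
     \<not> (\<exists>R' w w'. R < R' \<and> is_sol p n f g v0 R' w w' \<and> (\<forall>r\<in>ivl0 R. w r = v r))"

end

(*
  Write psi = v'^(p-1) and h = f(v) + g(v'). The equation is (r^(n-1) psi)' = r^(n-1) h, i.e.
  psi' = h - (n-1) psi / r. Since h turns out to be nondecreasing, (n-1) psi / r <= (1 - 1/n) h,
  so h/n <= psi' <= h: v' grows at least linearly and psi' is comparable to f(v) + g(v').

  If the integral of s^(p-2)/g(s) converges and T is its tail, then T(v'(r)) decreases at a rate
  at least 1/(n(p-1)) while staying nonnegative, so R is finite. If the integral of F^(-1/p)
  converges, the energy (p-1)/p v'^p - F(v)/n is nondecreasing, hence v' >= c F(v)^(1/p) for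
  large r, and the tail of F^(-1/p) evaluated along v decreases at a uniform rate.

  If v' stayed bounded at a finite R, then v and v' would extend continuously to R, and a
  monotone iteration of the integral equations would continue the solution beyond R; so v' blows
  up at the end of a maximal solution. Finally g(v')/n <= psi' <= f(sup v) + g(v') makes the
  derivative of the integral of s^(p-1)/g(s) up to v'(r) comparable to v', so v stays bounded
  exactly when the integral of s^(p-1)/g(s) converges.
*)
theory Submission
  imports Defs
begin

lemma open_ereal_less: "open {s::real. ereal s < R}"
proof (cases R)
  case (real r)
  then show ?thesis by (simp add: open_Collect_less continuous_on_id)
qed simp_all

lemma deriv_nonneg_imp_le:
  fixes Z Z' :: "real \<Rightarrow> real"
  assumes "a \<le> b"
    and "\<And>x. a \<le> x \<Longrightarrow> x \<le> b \<Longrightarrow> (Z has_real_derivative Z' x) (at x)"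
    and "\<And>x. a \<le> x \<Longrightarrow> x \<le> b \<Longrightarrow> 0 \<le> Z' x"
  shows "Z a \<le> Z b"
proof (rule DERIV_nonneg_imp_nondecreasing[OF assms(1)])
  fix x assume "a \<le> x" "x \<le> b"
  then show "\<exists>y. DERIV Z x :> y \<and> y \<ge> 0" using assms(2,3) by blast
qed

lemma deriv_nonpos_imp_ge:
  fixes Z Z' :: "real \<Rightarrow> real"
  assumes "a \<le> b"
    and "\<And>x. a \<le> x \<Longrightarrow> x \<le> b \<Longrightarrow> (Z has_real_derivative Z' x) (at x)"
    and "\<And>x. a \<le> x \<Longrightarrow> x \<le> b \<Longrightarrow> Z' x \<le> 0"
  shows "Z b \<le> Z a"
proof (rule DERIV_nonpos_imp_nonincreasing[OF assms(1)])
  fix x assume "a \<le> x" "x \<le> b"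
  then show "\<exists>y. DERIV Z x :> y \<and> y \<le> 0" using assms(2,3) by blast
qed

lemma unbounded_below_if_deriv_le_neg:
  fixes Z Z' :: "real \<Rightarrow> real"
  assumes c: "0 < c"
    and deriv: "\<And>x. a \<le> x \<Longrightarrow> (Z has_real_derivative Z' x) (at x)"
    and neg: "\<And>x. a \<le> x \<Longrightarrow> Z' x \<le> - c"
  shows "\<exists>x\<ge>a. Z x < m"
proof -
  define x where "x = a + (\<bar>Z a - m\<bar> + 1) / c"
  have ax: "a \<le> x" unfolding x_def using c by simp
  have "Z x + c * x \<le> Z a + c * a"
  proof (rule deriv_nonpos_imp_ge[OF ax])
    fix y assume y: "a \<le> y"
    show "((\<lambda>x. Z x + c * x) has_real_derivative Z' y + c) (at y)"
      using deriv[OF y] by (auto intro!: derivative_eq_intros)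
    show "Z' y + c \<le> 0" using neg[OF y] by simp
  qed
  moreover have "c * x = c * a + \<bar>Z a - m\<bar> + 1" unfolding x_def using c by (simp add: field_simps)
  ultimately have "Z x < m" by linarith
  then show ?thesis using ax by blast
qed

lemma integral_Icc_has_real_derivative:
  fixes h :: "real \<Rightarrow> real"
  assumes cont: "continuous_on {a..} h" and x: "a < x"
  shows "((\<lambda>y. integral {a..y} h) has_real_derivative h x) (at x)"
proof -
  have "continuous_on {a..x+1} h" using continuous_on_subset[OF cont] by auto
  then have "((\<lambda>y. integral {a..y} h) has_real_derivative h x) (at x within {a..x+1})"
    using integral_has_real_derivative x by auto
  moreover have "at x within {a..x+1} = at x"
    using x by (intro at_within_interior) auto
  ultimately show ?thesis by simp
qed

lemma integral_Icc_bounded_if_nn_integral_finite: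
  fixes h :: "real \<Rightarrow> real"
  assumes cont: "continuous_on {a..} h" and nonneg: "\<And>x. a \<le> x \<Longrightarrow> 0 \<le> h x"
    and fin: "(\<integral>\<^sup>+ s\<in>{a..}. ennreal (h s) \<partial>lborel) < \<infinity>"
  obtains B where "\<And>x. a \<le> x \<Longrightarrow> integral {a..x} h \<le> B"
proof
  define N where "N = (\<integral>\<^sup>+ s\<in>{a..}. ennreal (h s) \<partial>lborel)"
  fix x assume "a \<le> x"
  have int: "h integrable_on {a..x}"
    using continuous_on_subset[OF cont] by (intro integrable_continuous_real) auto
  have "ennreal (integral {a..x} h) = (\<integral>\<^sup>+ s. ennreal (h s) * indicator {a..x} s \<partial>lborel)"
    using nn_integral_has_integral_lebesgue'[OF _ integrable_integral[OF int]] nonneg by auto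
  also have "\<dots> \<le> N" unfolding N_def
    by (intro nn_integral_mono mult_left_mono) (auto simp: indicator_def)
  finally have "ennreal (integral {a..x} h) \<le> N" .
  moreover have "0 \<le> integral {a..x} h" using nonneg by (intro integral_nonneg int) auto
  ultimately show "integral {a..x} h \<le> enn2real N" using fin unfolding N_def
    by (metis enn2real_ennreal enn2real_mono infinity_ennreal_def)
qed

lemma nn_integral_finite_if_integral_Icc_bounded:
  fixes h :: "real \<Rightarrow> real"
  assumes cont: "continuous_on {a..} h" and nonneg: "\<And>x. a \<le> x \<Longrightarrow> 0 \<le> h x"
    and bound: "\<And>x. a \<le> x \<Longrightarrow> integral {a..x} h \<le> B"
  shows "(\<integral>\<^sup>+ s\<in>{a..}. ennreal (h s) \<partial>lborel) < \<infinity>"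
proof -
  have int: "h integrable_on {a..x}" for x
    using continuous_on_subset[OF cont] by (intro integrable_continuous_real) auto
  define F where "F k x = (if x \<in> {..a + real k} then h x else 0)" for k :: nat and x
  have Ici_Int: "{..a + real k} \<inter> {a..} = {a..a + real k}" for k by auto
  have F_int: "F k integrable_on {a..}" for k
    unfolding F_def using integrable_restrict_Int[where f=h and S="{..a + real k}" and T="{a..}"] int
    by (simp add: Ici_Int)
  have F_integral: "integral {a..} (F k) = integral {a..a + real k} h" for k
    unfolding F_def
    using Henstock_Kurzweil_Integration.integral_restrict_Int[where f=h and S="{..a + real k}" and T="{a..}"]
    by (simp add: Ici_Int)
  have "h integrable_on {a..} \<and> ((\<lambda>k. integral {a..} (F k)) \<longlonglongrightarrow> integral {a..} h)"
  proof (rule monotone_convergence_increasing)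
    show "F k x \<le> F (Suc k) x" if "x \<in> {a..}" for k x using nonneg that by (auto simp: F_def)
    show "(\<lambda>k. F k x) \<longlonglongrightarrow> h x" for x
    proof (rule tendsto_eventually)
      obtain k0 :: nat where "x - a \<le> real k0" using real_arch_simple by blast
      then show "\<forall>\<^sub>F k in sequentially. F k x = h x"
        unfolding F_def eventually_sequentially by (intro exI[of _ k0]) auto
    qed
    have "0 \<le> integral {a..a + real k} h" for k using nonneg by (intro integral_nonneg int) auto
    then have "\<bar>integral {a..} (F k)\<bar> \<le> B" for k using bound[of "a + real k"] F_integral[of k] by auto
    then show "bounded (range (\<lambda>k. integral {a..} (F k)))" by (intro boundedI) auto
  qed (rule F_int)
  then have "(h has_integral integral {a..} h) {a..}" by blast
  from nn_integral_has_integral_lebesgue'[OF _ this] nonneg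
  have "(\<integral>\<^sup>+ s. ennreal (h s) * indicator {a..} s \<partial>lborel) = ennreal (integral {a..} h)" by auto
  then show ?thesis by simp
qed

lemma nonneg_tail_primitive:
  fixes h :: "real \<Rightarrow> real"
  assumes cont: "continuous_on {a..} h" and nonneg: "\<And>x. a \<le> x \<Longrightarrow> 0 \<le> h x"
    and fin: "(\<integral>\<^sup>+ s\<in>{a..}. ennreal (h s) \<partial>lborel) < \<infinity>"
  obtains T where "\<And>x. a \<le> x \<Longrightarrow> 0 \<le> T x" and "\<And>x. a < x \<Longrightarrow> (T has_real_derivative - h x) (at x)"
proof -
  obtain B where B: "\<And>x. a \<le> x \<Longrightarrow> integral {a..x} h \<le> B"
    using integral_Icc_bounded_if_nn_integral_finite[OF cont nonneg fin] by blast
  show ?thesis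
  proof (rule that[of "\<lambda>x. B - integral {a..x} h"])
    show "((\<lambda>x. B - integral {a..x} h) has_real_derivative - h x) (at x)" if "a < x" for x
      using DERIV_diff[OF DERIV_const integral_Icc_has_real_derivative[OF cont that]] by simp
  qed (use B in auto)
qed

lemma integral_eq_left_limit:
  fixes h F :: "real \<Rightarrow> real"
  assumes ab: "a < b" and int: "h integrable_on {a..b}"
    and eq: "\<And>y. a \<le> y \<Longrightarrow> y < b \<Longrightarrow> F y = integral {a..y} h"
    and lim: "(F \<longlongrightarrow> c) (at_left b)"
  shows "integral {a..b} h = c"
proof -
  have "continuous_on {a..b} (\<lambda>y. integral {a..y} h)"
    by (rule indefinite_integral_continuous_1[OF int])
  then have "((\<lambda>y. integral {a..y} h) \<longlongrightarrow> integral {a..b} h) (at_left b)"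
    using ab unfolding continuous_on_eq_continuous_within continuous_within
      at_within_Icc_at_left[OF ab, symmetric] by auto
  moreover have "eventually (\<lambda>y. F y = integral {a..y} h) (at_left b)"
    unfolding eventually_at_left_field using ab eq by (intro exI[of _ a]) auto
  ultimately have "(F \<longlongrightarrow> integral {a..b} h) (at_left b)"
    by (simp add: tendsto_cong)
  then show ?thesis using tendsto_unique[OF trivial_limit_at_left_real] lim by blast
qed

lemma continuous_on_Icc_glue:
  fixes u w :: "real \<Rightarrow> real"
  assumes "continuous_on {a..b} u" "continuous_on {b..c} w" "u b = w b"
  shows "continuous_on {a..c} (\<lambda>x. if x \<le> b then u x else w x)"
proof (rule continuous_on_cases_le[where h="\<lambda>x. x"])
  show "continuous_on {x \<in> {a..c}. x \<le> b} u" by (rule continuous_on_subset[OF assms(1)]) auto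
  show "continuous_on {x \<in> {a..c}. b \<le> x} w" by (rule continuous_on_subset[OF assms(2)]) auto
qed (use assms(3) in \<open>auto intro: continuous_on_id\<close>)

lemma integral_Icc_glue:
  fixes u w :: "real \<Rightarrow> real"
  assumes "a \<le> b" "b \<le> c" "u integrable_on {a..b}" "w integrable_on {b..c}" "u b = w b"
  shows "integral {a..c} (\<lambda>x. if x \<le> b then u x else w x) = integral {a..b} u + integral {b..c} w"
proof -
  let ?uw = "\<lambda>x. if x \<le> b then u x else w x"
  have left_int: "?uw integrable_on {a..b}"
    using assms(3) by (rule Henstock_Kurzweil_Integration.integrable_cong[THEN iffD1, rotated]) simp
  have left: "integral {a..b} ?uw = integral {a..b} u" by (rule integral_cong) simp
  have right_int: "?uw integrable_on {b..c}"
    using assms(4) by (rule Henstock_Kurzweil_Integration.integrable_cong[THEN iffD1, rotated])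
      (use assms(5) in auto)
  have right: "integral {b..c} ?uw = integral {b..c} w" by (rule integral_cong) (use assms(5) in auto)
  have "?uw integrable_on {a..c}"
    using assms(1,2) left_int right_int by (intro Henstock_Kurzweil_Integration.integrable_combine[of a b c])
  then show ?thesis
    using assms(1,2) left right Henstock_Kurzweil_Integration.integral_combine[of a b c ?uw] by simp
qed

lemma continuous_on_extend_at_left:
  fixes u :: "real \<Rightarrow> real"
  assumes cont: "continuous_on {a..<b} u" and lim: "(u \<longlongrightarrow> c) (at_left b)" and ab: "a < b"
  shows "continuous_on {a..b} (\<lambda>x. if x < b then u x else c)"
  unfolding continuous_on_eq_continuous_within
proof
  fix x assume x: "x \<in> {a..b}"
  let ?u = "\<lambda>x. if x < b then u x else c"
  show "continuous (at x within {a..b}) ?u"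
  proof (cases "x < b")
    case True
    have at_eq: "at x within {a..b} = at x within {a..<b}"
      by (rule at_within_nhd[of _ "{..<b}"]) (use True x in auto)
    have "eventually (\<lambda>y. ?u y = u y) (at x within {a..<b})"
      unfolding eventually_at_filter by (intro always_eventually) auto
    moreover have "(u \<longlongrightarrow> u x) (at x within {a..<b})"
      using cont True x unfolding continuous_on_def by auto
    ultimately have "(?u \<longlongrightarrow> u x) (at x within {a..<b})" by (simp add: tendsto_cong)
    then show ?thesis unfolding continuous_within at_eq using True by simp
  next
    case False
    then have xb: "x = b" using x by auto
    have "eventually (\<lambda>y. ?u y = u y) (at_left b)"
      unfolding eventually_at_left_field using ab by (intro exI[of _ a]) auto
    then have "(?u \<longlongrightarrow> c) (at_left b)" using lim by (simp add: tendsto_cong)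
    then show ?thesis unfolding continuous_within xb at_within_Icc_at_left[OF ab] by simp
  qed
qed

lemma filterlim_at_top_at_left_iff_unbounded:
  fixes u :: "real \<Rightarrow> real"
  assumes b: "0 < b" and mono: "mono_on {0..<b} u"
  shows "filterlim u at_top (at_left b) \<longleftrightarrow> (\<forall>M. \<exists>x\<in>{0..<b}. M < u x)"
proof
  assume lim: "filterlim u at_top (at_left b)"
  show "\<forall>M. \<exists>x\<in>{0..<b}. M < u x"
  proof
    fix M
    have "eventually (\<lambda>x. M < u x) (at_left b)" using lim filterlim_at_top_dense by blast
    then obtain c where c: "c < b" "\<And>y. c < y \<Longrightarrow> y < b \<Longrightarrow> M < u y"
      unfolding eventually_at_left_field by blast
    define y where "y = (max c 0 + b) / 2"
    have "c < y" "0 \<le> y" "y < b" unfolding y_def using c b by (auto simp: max_def)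
    then show "\<exists>x\<in>{0..<b}. M < u x" using c by (intro bexI[of _ y]) auto
  qed
next
  assume unbounded: "\<forall>M. \<exists>x\<in>{0..<b}. M < u x"
  show "filterlim u at_top (at_left b)"
    unfolding filterlim_at_top
  proof
    fix M
    obtain x where x: "x \<in> {0..<b}" "M < u x" using unbounded by blast
    have "M \<le> u y" if "x < y" "y < b" for y
      using mono_onD[OF mono, of x y] x that by auto
    then show "eventually (\<lambda>y. M \<le> u y) (at_left b)"
      unfolding eventually_at_left_field using x by (intro exI[of _ x]) auto
  qed
qed

lemma mono_on_bounded_tendsto_at_left:
  fixes u :: "real \<Rightarrow> real"
  assumes b: "0 < b" and mono: "mono_on {0..<b} u" and bound: "\<And>x. x \<in> {0..<b} \<Longrightarrow> u x \<le> A"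
  obtains c where "(u \<longlongrightarrow> c) (at_left b)" and "\<And>x. x \<in> {0..<b} \<Longrightarrow> u x \<le> c"
proof
  define c where "c = Sup (u ` ({..<b} \<inter> {0..}))"
  have "(u \<longlongrightarrow> c) (at b within ({..<b} \<inter> {0..}))"
    unfolding c_def using mono bound by (intro Lim_left_bound) (auto intro: mono_onD)
  moreover have "at b within ({..<b} \<inter> {0..}) = at_left b"
    by (rule at_within_nhd[of _ "{0<..}"]) (use b in auto)
  ultimately show "(u \<longlongrightarrow> c) (at_left b)" by simp
  show "u x \<le> c" if "x \<in> {0..<b}" for x
    unfolding c_def using that bound by (intro cSup_upper bdd_aboveI2[of _ _ A]) auto
qed

lemma continuous_on_Ici_if_lipschitz_on_Icc:
  fixes g :: "real \<Rightarrow> real"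
  assumes lip: "\<forall>T\<ge>0. \<exists>L. L-lipschitz_on {0..T} g"
  shows "continuous_on {0..} g"
  unfolding continuous_on_eq_continuous_within
proof
  fix x :: real assume "x \<in> {0..}"
  then have x: "0 \<le> x" by simp
  obtain L where "L-lipschitz_on {0..x+1} g" using lip x by force
  then have "continuous_on {0..x+1} g" by (rule lipschitz_on_continuous_on)
  then have "continuous (at x within {0..x+1}) g"
    using x by (simp add: continuous_on_eq_continuous_within)
  moreover have "at x within {0..} = at x within {0..x+1}"
    by (rule at_within_nhd[of _ "{..<x+1}"]) (use x in auto)
  ultimately show "continuous (at x within {0..}) g" by simp
qed

lemma integral_tendsto_of_incseq:
  fixes F :: "nat \<Rightarrow> real \<Rightarrow> real" and G :: "real \<Rightarrow> real"
  assumes cont: "\<And>k. continuous_on {a..b} (F k)"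
    and inc: "\<And>k x. x \<in> {a..b} \<Longrightarrow> F k x \<le> F (Suc k) x"
    and lim: "\<And>x. x \<in> {a..b} \<Longrightarrow> (\<lambda>k. F k x) \<longlonglongrightarrow> G x"
    and bound: "\<And>k x. x \<in> {a..b} \<Longrightarrow> 0 \<le> F k x \<and> F k x \<le> M"
  shows "G integrable_on {a..b}" and "(\<lambda>k. integral {a..b} (F k)) \<longlonglongrightarrow> integral {a..b} G"
proof -
  have int: "F k integrable_on {a..b}" for k by (rule integrable_continuous_real[OF cont])
  have "\<bar>integral {a..b} (F k)\<bar> \<le> integral {a..b} (\<lambda>_. M)" for k
  proof -
    have "0 \<le> integral {a..b} (F k)" using bound by (intro integral_nonneg int) auto
    moreover have "integral {a..b} (F k) \<le> integral {a..b} (\<lambda>_. M)"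
      using bound by (intro integral_le int) auto
    ultimately show ?thesis by simp
  qed
  then have "bounded (range (\<lambda>k. integral {a..b} (F k)))"
    by (intro boundedI) auto
  then have "G integrable_on {a..b} \<and> (\<lambda>k. integral {a..b} (F k)) \<longlonglongrightarrow> integral {a..b} G"
    using int inc lim by (intro monotone_convergence_increasing) auto
  then show "G integrable_on {a..b}" "(\<lambda>k. integral {a..b} (F k)) \<longlonglongrightarrow> integral {a..b} G"
    by auto
qed

section \<open>Local solvability of the integral system beyond a point\<close>

text \<open>
  The pair (V, Y) stands for (v, r^(n-1) v'^(p-1)) beyond a point r0, so that the equation becomes
  the integral system V = b + \<integral> slope Y, Y = L + \<integral> source V Y. As f, g and flux_inv are
  nondecreasing, the iterates of the integral operator started at the constant pair (b, L) increase
  pointwise; on a short interval they stay in the box [b, b+1] \<times> [L, L+1], and monotone convergence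
  passes to the limit. No Lipschitz condition is needed.
\<close>
locale continuation_system =
  fixes p :: real and n :: nat and f g :: "real \<Rightarrow> real" and r0 b L :: real
  assumes p: "1 < p" and r0: "0 < r0" and b: "0 \<le> b" and L: "0 < L"
    and f_cont: "continuous_on {0..} f" and g_cont: "continuous_on {0..} g"
    and f_mono: "\<And>x y. 0 \<le> x \<Longrightarrow> x \<le> y \<Longrightarrow> f x \<le> f y"
    and g_mono: "\<And>x y. 0 \<le> x \<Longrightarrow> x \<le> y \<Longrightarrow> g x \<le> g y"
    and f_nonneg: "\<And>x. 0 \<le> x \<Longrightarrow> 0 \<le> f x"
    and g_nonneg: "\<And>x. 0 \<le> x \<Longrightarrow> 0 \<le> g x"
begin

definition flux_inv :: "real \<Rightarrow> real \<Rightarrow> real" where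
  "flux_inv s y = (y / s ^ (n - 1)) powr (1 / (p - 1))"

definition slope_bound :: real where "slope_bound = flux_inv r0 (L + 1)"

definition source_bound :: real where
  "source_bound = (r0 + 1) ^ (n - 1) * (f (b + 1) + g slope_bound)"

definition \<delta> :: real where "\<delta> = min 1 (1 / (slope_bound + source_bound + 1))"

abbreviation J :: "real set" where "J \<equiv> {r0..r0 + \<delta>}"

definition slope :: "(real \<Rightarrow> real) \<Rightarrow> real \<Rightarrow> real" where
  "slope Y s = flux_inv s (Y s)"

definition source :: "(real \<Rightarrow> real) \<Rightarrow> (real \<Rightarrow> real) \<Rightarrow> real \<Rightarrow> real" where
  "source V Y s = s ^ (n - 1) * (f (V s) + g (slope Y s))"

definition integral_map ::
  "(real \<Rightarrow> real) \<times> (real \<Rightarrow> real) \<Rightarrow> (real \<Rightarrow> real) \<times> (real \<Rightarrow> real)" where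
  "integral_map VY = (\<lambda>r. b + integral {r0..r} (slope (snd VY)),
                      \<lambda>r. L + integral {r0..r} (source (fst VY) (snd VY)))"

definition in_box :: "(real \<Rightarrow> real) \<times> (real \<Rightarrow> real) \<Rightarrow> bool" where
  "in_box VY \<longleftrightarrow> continuous_on J (fst VY) \<and> continuous_on J (snd VY) \<and>
     (\<forall>r\<in>J. b \<le> fst VY r \<and> fst VY r \<le> b + 1 \<and> L \<le> snd VY r \<and> snd VY r \<le> L + 1)"

definition pair_le :: "(real \<Rightarrow> real) \<times> (real \<Rightarrow> real) \<Rightarrow> (real \<Rightarrow> real) \<times> (real \<Rightarrow> real) \<Rightarrow> bool" where
  "pair_le VY VY' \<longleftrightarrow> (\<forall>r\<in>J. fst VY r \<le> fst VY' r \<and> snd VY r \<le> snd VY' r)"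

lemma flux_inv_nonneg: "0 \<le> flux_inv s y"
  by (simp add: flux_inv_def)

lemma flux_inv_mono: "0 < s \<Longrightarrow> 0 \<le> y \<Longrightarrow> y \<le> y' \<Longrightarrow> flux_inv s y \<le> flux_inv s y'"
  unfolding flux_inv_def using p by (intro powr_mono2 divide_right_mono) auto

lemma flux_inv_le_slope_bound:
  assumes "r0 \<le> s" "0 \<le> y" "y \<le> L + 1"
  shows "flux_inv s y \<le> slope_bound"
proof -
  have "y / s ^ (n - 1) \<le> (L + 1) / r0 ^ (n - 1)"
    using assms r0 L by (intro frac_le power_mono) auto
  then show ?thesis unfolding slope_bound_def flux_inv_def using assms r0 p
    by (intro powr_mono2) auto
qed

lemma slope_bound_nonneg: "0 \<le> slope_bound"
  by (simp add: slope_bound_def flux_inv_nonneg)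

lemma source_bound_nonneg: "0 \<le> source_bound"
  unfolding source_bound_def using f_nonneg g_nonneg slope_bound_nonneg b r0 by simp

lemma \<delta>_pos: "0 < \<delta>" and \<delta>_le_1: "\<delta> \<le> 1"
  and \<delta>_slope: "\<delta> * slope_bound \<le> 1" and \<delta>_source: "\<delta> * source_bound \<le> 1"
proof -
  define B where "B = slope_bound + source_bound + 1"
  have B: "0 < B" "slope_bound \<le> B" "source_bound \<le> B"
    unfolding B_def using slope_bound_nonneg source_bound_nonneg by auto
  have \<delta>_B: "\<delta> = min 1 (1 / B)" unfolding \<delta>_def B_def ..
  show "0 < \<delta>" "\<delta> \<le> 1" unfolding \<delta>_B using B by auto
  have "\<delta> * M \<le> 1" if "0 \<le> M" "M \<le> B" for M
  proof -
    have "\<delta> * M \<le> 1 / B * M" unfolding \<delta>_B using that by (intro mult_right_mono) auto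
    also have "\<dots> \<le> 1" using that B by (simp add: field_simps)
    finally show ?thesis .
  qed
  then show "\<delta> * slope_bound \<le> 1" "\<delta> * source_bound \<le> 1"
    using B slope_bound_nonneg source_bound_nonneg by auto
qed

lemma J_pos: "s \<in> J \<Longrightarrow> 0 < s"
  using r0 by auto

lemma slope_cont:
  assumes "continuous_on J Y" and "\<And>r. r \<in> J \<Longrightarrow> L \<le> Y r"
  shows "continuous_on J (slope Y)"
proof -
  have "Y s / s ^ (n - 1) \<noteq> 0" if "s \<in> J" for s
    using assms(2)[OF that] L J_pos[OF that] by simp
  then show ?thesis unfolding slope_def[abs_def] flux_inv_def
    using J_pos by (intro continuous_intros assms(1)) auto
qed

lemma source_cont:
  assumes "in_box VY"
  shows "continuous_on J (source (fst VY) (snd VY))"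
proof -
  have "continuous_on J (\<lambda>s. f (fst VY s))"
    using assms b unfolding in_box_def by (intro continuous_on_compose2[OF f_cont]) auto
  moreover have "continuous_on J (slope (snd VY))"
    using assms unfolding in_box_def by (intro slope_cont) auto
  then have "continuous_on J (\<lambda>s. g (slope (snd VY) s))"
    by (rule continuous_on_compose2[OF g_cont]) (auto simp: slope_def flux_inv_nonneg)
  ultimately show ?thesis unfolding source_def[abs_def] by (intro continuous_intros)
qed

lemma slope_bounds:
  assumes "in_box VY" "s \<in> J"
  shows "0 \<le> slope (snd VY) s \<and> slope (snd VY) s \<le> slope_bound"
proof -
  have "L \<le> snd VY s" "snd VY s \<le> L + 1" using assms unfolding in_box_def by auto
  then show ?thesis using assms(2) L flux_inv_nonneg flux_inv_le_slope_bound unfolding slope_def by auto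
qed

lemma source_bounds:
  assumes "in_box VY" "s \<in> J"
  shows "0 \<le> source (fst VY) (snd VY) s \<and> source (fst VY) (snd VY) s \<le> source_bound"
proof -
  let ?V = "fst VY s" and ?slope = "slope (snd VY) s"
  have V: "b \<le> ?V" "?V \<le> b + 1" using assms unfolding in_box_def by auto
  have s: "0 < s" "s \<le> r0 + 1" using assms(2) \<delta>_le_1 r0 by auto
  have fV: "0 \<le> f ?V" "f ?V \<le> f (b + 1)" using f_nonneg f_mono V b by auto
  have "0 \<le> ?slope" "?slope \<le> slope_bound" using slope_bounds[OF assms] by auto
  then have gY: "0 \<le> g ?slope" "g ?slope \<le> g slope_bound" using g_nonneg g_mono by auto
  have "s ^ (n - 1) \<le> (r0 + 1) ^ (n - 1)" using s by (intro power_mono) auto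
  then show ?thesis unfolding source_def source_bound_def using fV gY s
    by (auto intro!: mult_mono add_mono)
qed

lemma integral_J_bounds:
  assumes "continuous_on J G" and "\<And>s. s \<in> J \<Longrightarrow> 0 \<le> G s \<and> G s \<le> M"
    and "\<delta> * M \<le> 1" and "r \<in> J"
  shows "0 \<le> integral {r0..r} G \<and> integral {r0..r} G \<le> 1"
proof -
  have sub: "{r0..r} \<subseteq> J" using assms(4) by auto
  have int: "G integrable_on {r0..r}"
    using continuous_on_subset[OF assms(1) sub] by (rule integrable_continuous_real)
  have M: "0 \<le> M" using assms(2)[of r0] \<delta>_pos by auto
  have "0 \<le> integral {r0..r} G" using assms(2) sub by (intro integral_nonneg int) auto
  moreover have "integral {r0..r} G \<le> integral {r0..r} (\<lambda>_. M)"
    using assms(2) sub by (intro integral_le int) auto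
  moreover have "integral {r0..r} (\<lambda>_. M) \<le> \<delta> * M"
    using assms(4) M by (auto intro: mult_right_mono)
  ultimately show ?thesis using assms(3) by linarith
qed

lemma integral_map_in_box:
  assumes "in_box VY"
  shows "in_box (integral_map VY)"
proof -
  have c1: "continuous_on J (slope (snd VY))"
    using assms unfolding in_box_def by (intro slope_cont) auto
  have c2: "continuous_on J (source (fst VY) (snd VY))" using source_cont[OF assms] .
  have "0 \<le> integral {r0..r} (slope (snd VY)) \<and> integral {r0..r} (slope (snd VY)) \<le> 1"
    if "r \<in> J" for r
    using integral_J_bounds[OF c1 _ \<delta>_slope that] slope_bounds[OF assms] by blast
  moreover have "0 \<le> integral {r0..r} (source (fst VY) (snd VY)) \<and>
      integral {r0..r} (source (fst VY) (snd VY)) \<le> 1" if "r \<in> J" for r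
    using integral_J_bounds[OF c2 _ \<delta>_source that] source_bounds[OF assms] by blast
  moreover have "continuous_on J (\<lambda>r. integral {r0..r} (slope (snd VY)))"
    by (rule indefinite_integral_continuous_1[OF integrable_continuous_real[OF c1]])
  moreover have "continuous_on J (\<lambda>r. integral {r0..r} (source (fst VY) (snd VY)))"
    by (rule indefinite_integral_continuous_1[OF integrable_continuous_real[OF c2]])
  ultimately show ?thesis unfolding in_box_def integral_map_def
    by (auto intro!: continuous_intros)
qed

lemma integral_map_mono:
  assumes VY: "in_box VY" and VY': "in_box VY'" and le: "pair_le VY VY'"
  shows "pair_le (integral_map VY) (integral_map VY')"
proof -
  have slope_le: "slope (snd VY) s \<le> slope (snd VY') s" if s: "s \<in> J" for s
  proof -
    have "L \<le> snd VY s" "snd VY s \<le> snd VY' s" using VY le s unfolding in_box_def pair_le_def by auto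
    then show ?thesis unfolding slope_def using L J_pos[OF s] by (intro flux_inv_mono) auto
  qed
  have source_le: "source (fst VY) (snd VY) s \<le> source (fst VY') (snd VY') s" if s: "s \<in> J" for s
  proof -
    have "b \<le> fst VY s" "fst VY s \<le> fst VY' s" using VY le s unfolding in_box_def pair_le_def by auto
    then have "f (fst VY s) \<le> f (fst VY' s)" using b by (intro f_mono) auto
    moreover have "g (slope (snd VY) s) \<le> g (slope (snd VY') s)"
      using slope_le[OF s] by (intro g_mono) (auto simp: slope_def flux_inv_nonneg)
    ultimately show ?thesis unfolding source_def using J_pos[OF s] by (intro mult_left_mono) auto
  qed
  have cont: "continuous_on J (slope (snd VY))" "continuous_on J (slope (snd VY'))"
    "continuous_on J (source (fst VY) (snd VY))" "continuous_on J (source (fst VY') (snd VY'))"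
    using VY VY' source_cont unfolding in_box_def by (auto intro!: slope_cont)
  show ?thesis unfolding pair_le_def integral_map_def fst_conv snd_conv
  proof (intro ballI conjI add_left_mono)
    fix r assume "r \<in> J"
    then have sub: "{r0..r} \<subseteq> J" by auto
    show "integral {r0..r} (slope (snd VY)) \<le> integral {r0..r} (slope (snd VY'))"
      using slope_le sub cont
      by (auto intro!: integral_le integrable_continuous_real intro: continuous_on_subset)
    show "integral {r0..r} (source (fst VY) (snd VY)) \<le> integral {r0..r} (source (fst VY') (snd VY'))"
      using source_le sub cont
      by (auto intro!: integral_le integrable_continuous_real intro: continuous_on_subset)
  qed
qed

definition iterate :: "nat \<Rightarrow> (real \<Rightarrow> real) \<times> (real \<Rightarrow> real)" where
  "iterate k = (integral_map ^^ k) (\<lambda>_. b, \<lambda>_. L)"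

lemma iterate_Suc: "iterate (Suc k) = integral_map (iterate k)"
  by (simp add: iterate_def)

lemma iterate_in_box: "in_box (iterate k)"
proof (induction k)
  case 0
  show ?case using b L unfolding in_box_def iterate_def by auto
next
  case (Suc k)
  then show ?case unfolding iterate_Suc by (rule integral_map_in_box)
qed

lemma iterate_increasing: "pair_le (iterate k) (iterate (Suc k))"
proof (induction k)
  case 0
  have "in_box (iterate 1)" by (rule iterate_in_box)
  then show ?case unfolding pair_le_def in_box_def by (auto simp: iterate_def)
next
  case (Suc k)
  then show ?case unfolding iterate_Suc[of "Suc k"] iterate_Suc[of k]
    using integral_map_mono iterate_in_box by (metis iterate_Suc)
qed

lemma iterate_bounds:
  assumes "r \<in> J"
  shows "b \<le> fst (iterate k) r \<and> fst (iterate k) r \<le> b + 1 \<and>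
         L \<le> snd (iterate k) r \<and> snd (iterate k) r \<le> L + 1"
  using iterate_in_box[of k] assms unfolding in_box_def by auto

definition V_lim :: "real \<Rightarrow> real" where "V_lim r = (SUP k. fst (iterate k) r)"
definition Y_lim :: "real \<Rightarrow> real" where "Y_lim r = (SUP k. snd (iterate k) r)"

lemma iterate_tendsto:
  assumes r: "r \<in> J"
  shows "(\<lambda>k. fst (iterate k) r) \<longlonglongrightarrow> V_lim r" and "(\<lambda>k. snd (iterate k) r) \<longlonglongrightarrow> Y_lim r"
proof -
  have "incseq (\<lambda>k. fst (iterate k) r)" "incseq (\<lambda>k. snd (iterate k) r)"
    using iterate_increasing r unfolding pair_le_def by (auto intro!: incseq_SucI)
  moreover have "bdd_above (range (\<lambda>k. fst (iterate k) r))" "bdd_above (range (\<lambda>k. snd (iterate k) r))"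
    using iterate_bounds[OF r] by (auto intro!: bdd_aboveI2)
  ultimately show "(\<lambda>k. fst (iterate k) r) \<longlonglongrightarrow> V_lim r" "(\<lambda>k. snd (iterate k) r) \<longlonglongrightarrow> Y_lim r"
    unfolding V_lim_def Y_lim_def by (auto intro: LIMSEQ_incseq_SUP)
qed

lemma lim_bounds:
  assumes r: "r \<in> J"
  shows "b \<le> V_lim r \<and> V_lim r \<le> b + 1 \<and> L \<le> Y_lim r \<and> Y_lim r \<le> L + 1"
  using iterate_bounds[OF r]
    tendsto_lowerbound[OF iterate_tendsto(1)[OF r]] tendsto_upperbound[OF iterate_tendsto(1)[OF r]]
    tendsto_lowerbound[OF iterate_tendsto(2)[OF r]] tendsto_upperbound[OF iterate_tendsto(2)[OF r]]
  by (simp add: always_eventually)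

lemma slope_tendsto:
  assumes s: "s \<in> J"
  shows "(\<lambda>k. slope (snd (iterate k)) s) \<longlonglongrightarrow> slope Y_lim s"
proof -
  have "Y_lim s / s ^ (n - 1) \<noteq> 0" using lim_bounds[OF s] L J_pos[OF s] by simp
  then show ?thesis unfolding slope_def flux_inv_def
    by (intro tendsto_powr tendsto_divide iterate_tendsto[OF s] tendsto_const) (use J_pos[OF s] in auto)
qed

lemma source_tendsto:
  assumes s: "s \<in> J"
  shows "(\<lambda>k. source (fst (iterate k)) (snd (iterate k)) s) \<longlonglongrightarrow> source V_lim Y_lim s"
proof -
  have "0 \<le> fst (iterate k) s" "0 \<le> V_lim s" for k
    using iterate_bounds[OF s, of k] lim_bounds[OF s] b by linarith+
  then have "(\<lambda>k. f (fst (iterate k) s)) \<longlonglongrightarrow> f (V_lim s)"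
    by (intro continuous_on_tendsto_compose[OF f_cont iterate_tendsto(1)[OF s]]) auto
  moreover have "(\<lambda>k. g (slope (snd (iterate k)) s)) \<longlonglongrightarrow> g (slope Y_lim s)"
    by (rule continuous_on_tendsto_compose[OF g_cont slope_tendsto[OF s]])
       (auto simp: slope_def flux_inv_nonneg)
  ultimately show ?thesis unfolding source_def by (intro tendsto_intros)
qed

lemma V_lim_eq:
  assumes r: "r \<in> J"
  shows "slope Y_lim integrable_on {r0..r}" and "V_lim r = b + integral {r0..r} (slope Y_lim)"
proof -
  have sub: "{r0..r} \<subseteq> J" using r by auto
  have cont: "continuous_on {r0..r} (slope (snd (iterate k)))" for k
    using iterate_in_box[of k] continuous_on_subset[OF slope_cont sub] unfolding in_box_def by blast
  have mono: "slope (snd (iterate k)) x \<le> slope (snd (iterate (Suc k))) x" if "x \<in> {r0..r}" for k x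
    using iterate_bounds[of x k] iterate_increasing[of k] that sub L J_pos[of x]
    unfolding pair_le_def slope_def by (intro flux_inv_mono) auto
  have lim: "(\<lambda>k. slope (snd (iterate k)) x) \<longlonglongrightarrow> slope Y_lim x" if "x \<in> {r0..r}" for x
    using slope_tendsto that sub by auto
  have bound: "0 \<le> slope (snd (iterate k)) x \<and> slope (snd (iterate k)) x \<le> slope_bound"
    if "x \<in> {r0..r}" for k x
    using slope_bounds[OF iterate_in_box] that sub by auto
  note conv = integral_tendsto_of_incseq[OF cont mono lim bound]
  show "slope Y_lim integrable_on {r0..r}" by (rule conv(1))
  have "(\<lambda>k. fst (iterate (Suc k)) r) \<longlonglongrightarrow> b + integral {r0..r} (slope Y_lim)"
    unfolding iterate_Suc integral_map_def fst_conv by (intro tendsto_add tendsto_const conv(2))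
  then show "V_lim r = b + integral {r0..r} (slope Y_lim)"
    using LIMSEQ_Suc[OF iterate_tendsto(1)[OF r]] LIMSEQ_unique by blast
qed

lemma Y_lim_eq:
  assumes r: "r \<in> J"
  shows "source V_lim Y_lim integrable_on {r0..r}" and "Y_lim r = L + integral {r0..r} (source V_lim Y_lim)"
proof -
  have sub: "{r0..r} \<subseteq> J" using r by auto
  have cont: "continuous_on {r0..r} (source (fst (iterate k)) (snd (iterate k)))" for k
    using continuous_on_subset[OF source_cont[OF iterate_in_box] sub] .
  have mono: "source (fst (iterate k)) (snd (iterate k)) x \<le> source (fst (iterate (Suc k))) (snd (iterate (Suc k))) x"
    if "x \<in> {r0..r}" for k x
  proof -
    have x: "x \<in> J" using that sub by auto
    have "f (fst (iterate k) x) \<le> f (fst (iterate (Suc k)) x)"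
      using iterate_bounds[OF x, of k] iterate_increasing[of k] x b unfolding pair_le_def
      by (intro f_mono) auto
    moreover have "flux_inv x (snd (iterate k) x) \<le> flux_inv x (snd (iterate (Suc k)) x)"
      using iterate_bounds[OF x, of k] iterate_increasing[of k] x L J_pos[OF x] unfolding pair_le_def
      by (intro flux_inv_mono) auto
    then have "g (slope (snd (iterate k)) x) \<le> g (slope (snd (iterate (Suc k))) x)"
      unfolding slope_def by (intro g_mono flux_inv_nonneg)
    ultimately show ?thesis unfolding source_def using J_pos[OF x] by (intro mult_left_mono) auto
  qed
  have lim: "(\<lambda>k. source (fst (iterate k)) (snd (iterate k)) x) \<longlonglongrightarrow> source V_lim Y_lim x"
    if "x \<in> {r0..r}" for x
    using source_tendsto that sub by auto
  have bound: "0 \<le> source (fst (iterate k)) (snd (iterate k)) x \<and>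
      source (fst (iterate k)) (snd (iterate k)) x \<le> source_bound" if "x \<in> {r0..r}" for k x
    using source_bounds[OF iterate_in_box] that sub by auto
  note conv = integral_tendsto_of_incseq[OF cont mono lim bound]
  show "source V_lim Y_lim integrable_on {r0..r}" by (rule conv(1))
  have "(\<lambda>k. snd (iterate (Suc k)) r) \<longlonglongrightarrow> L + integral {r0..r} (source V_lim Y_lim)"
    unfolding iterate_Suc integral_map_def snd_conv by (intro tendsto_add tendsto_const conv(2))
  then show "Y_lim r = L + integral {r0..r} (source V_lim Y_lim)"
    using LIMSEQ_Suc[OF iterate_tendsto(2)[OF r]] LIMSEQ_unique by blast
qed

lemma integral_system_solvable:
  "\<exists>V Y. continuous_on J (slope Y) \<and>
     (\<forall>r\<in>J. L \<le> Y r \<and> source V Y integrable_on {r0..r} \<and>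
        V r = b + integral {r0..r} (slope Y) \<and> Y r = L + integral {r0..r} (source V Y))"
proof (intro exI conjI ballI)
  have "continuous_on J (\<lambda>r. L + integral {r0..r} (source V_lim Y_lim))"
    using \<delta>_pos by (intro continuous_intros indefinite_integral_continuous_1 Y_lim_eq(1)) auto
  then have "continuous_on J Y_lim"
    by (rule continuous_on_cong[THEN iffD1, rotated 2]) (use Y_lim_eq(2) in auto)
  then show "continuous_on J (slope Y_lim)" using lim_bounds by (intro slope_cont) auto
qed (use lim_bounds Y_lim_eq V_lim_eq(2) in auto)

end

section \<open>Integral solutions and their continuation\<close>

locale radial_problem =
  fixes p v0 :: real and n :: nat and f g :: "real \<Rightarrow> real"
  assumes p: "1 < p" and n: "1 \<le> n"
    and f_cont: "continuous_on {0..} f" and f_strict_mono: "strict_mono_on {0..} f" and f0: "f 0 = 0"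
    and g_cont: "continuous_on {0..} g" and g_strict_mono: "strict_mono_on {0..} g" and g0: "g 0 = 0"
    and v0: "0 < v0"
begin

lemma f_less: "0 \<le> x \<Longrightarrow> x < y \<Longrightarrow> f x < f y"
  using f_strict_mono by (simp add: strict_mono_onD)

lemma f_le: "0 \<le> x \<Longrightarrow> x \<le> y \<Longrightarrow> f x \<le> f y"
  using f_less by (cases "x = y") (auto simp: order.order_iff_strict)

lemma g_less: "0 \<le> x \<Longrightarrow> x < y \<Longrightarrow> g x < g y"
  using g_strict_mono by (simp add: strict_mono_onD)

lemma g_le: "0 \<le> x \<Longrightarrow> x \<le> y \<Longrightarrow> g x \<le> g y"
  using g_less by (cases "x = y") (auto simp: order.order_iff_strict)

lemma f_pos: "0 < x \<Longrightarrow> 0 < f x"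
  using f_less[of 0 x] f0 by simp

lemma f_nonneg: "0 \<le> x \<Longrightarrow> 0 \<le> f x"
  using f_le[of 0 x] f0 by simp

lemma g_pos: "0 < x \<Longrightarrow> 0 < g x"
  using g_less[of 0 x] g0 by simp

lemma g_nonneg: "0 \<le> x \<Longrightarrow> 0 \<le> g x"
  using g_le[of 0 x] g0 by simp

lemma powr_div_g_le_shifted:
  assumes c: "0 \<le> c" and t: "1 \<le> t"
  shows "t powr (p - 1) / g t \<le> (1 + c / g 1) * (t powr (p - 1) / (c + g t))"
proof -
  have "c \<le> c / g 1 * g t" using g_le[of 1 t] g_pos[of 1] t c by (simp add: field_simps mult_left_mono)
  then have "1 / g t \<le> (1 + c / g 1) / (c + g t)"
    using g_pos[of t] t c by (simp add: field_simps)
  then have "t powr (p - 1) * (1 / g t) \<le> t powr (p - 1) * ((1 + c / g 1) / (c + g t))"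
    by (intro mult_left_mono) auto
  then show ?thesis by (simp add: mult.commute)
qed

definition rhs :: "(real \<Rightarrow> real) \<Rightarrow> (real \<Rightarrow> real) \<Rightarrow> real \<Rightarrow> real" where
  "rhs w w' s = s ^ (n - 1) * (f (w s) + g (w' s))"

text \<open>Unlike is_sol, this integrated form also constrains the solution at the right
  endpoint T, where a continuation starts.\<close>
definition integral_sol :: "real \<Rightarrow> (real \<Rightarrow> real) \<Rightarrow> (real \<Rightarrow> real) \<Rightarrow> bool" where
  "integral_sol T w w' \<longleftrightarrow> continuous_on {0..T} w' \<and> w' 0 = 0 \<and>
     (\<forall>x\<in>{0..T}. 0 \<le> w' x \<and> w x = v0 + integral {0..x} w' \<and>
        x ^ (n - 1) * w' x powr (p - 1) = integral {0..x} (rhs w w'))"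

lemma integral_solD:
  assumes "integral_sol T w w'"
  shows "continuous_on {0..T} w'" and "w' 0 = 0"
    and "x \<in> {0..T} \<Longrightarrow> 0 \<le> w' x"
    and "x \<in> {0..T} \<Longrightarrow> w x = v0 + integral {0..x} w'"
    and "x \<in> {0..T} \<Longrightarrow> x ^ (n - 1) * w' x powr (p - 1) = integral {0..x} (rhs w w')"
  using assms by (simp_all add: integral_sol_def)

context
  fixes T :: real and w w' :: "real \<Rightarrow> real"
  assumes w'_cont: "continuous_on {0..T} w'" and w'_nonneg: "\<And>x. x \<in> {0..T} \<Longrightarrow> 0 \<le> w' x"
    and w_eq: "\<And>x. x \<in> {0..T} \<Longrightarrow> w x = v0 + integral {0..x} w'"
begin

lemma continuous_on_primitive: "continuous_on {0..T} w"
proof (cases "0 \<le> T")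
  case True
  have "continuous_on {0..T} (\<lambda>x. v0 + integral {0..x} w')"
    using True w'_cont
    by (intro continuous_intros indefinite_integral_continuous_1 integrable_continuous_real)
  then show ?thesis by (rule continuous_on_cong[THEN iffD1, rotated 2]) (use w_eq in auto)
qed simp

lemma primitive_ge_v0: assumes x: "x \<in> {0..T}" shows "v0 \<le> w x"
proof -
  have "w' integrable_on {0..x}"
    using continuous_on_subset[OF w'_cont] x by (intro integrable_continuous_real) auto
  then have "0 \<le> integral {0..x} w'" using w'_nonneg x by (intro integral_nonneg) auto
  then show ?thesis using w_eq[OF x] by simp
qed

lemma continuous_on_rhs: "continuous_on {0..T} (rhs w w')"
proof -
  have "continuous_on {0..T} (\<lambda>s. f (w s))"
    using primitive_ge_v0 v0 by (intro continuous_on_compose2[OF f_cont continuous_on_primitive]) force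
  moreover have "continuous_on {0..T} (\<lambda>s. g (w' s))"
    using w'_nonneg by (intro continuous_on_compose2[OF g_cont w'_cont]) auto
  ultimately show ?thesis unfolding rhs_def[abs_def] by (intro continuous_intros)
qed

end

lemma continuous_on_rhs_if_integral_sol: "integral_sol T w w' \<Longrightarrow> continuous_on {0..T} (rhs w w')"
  using continuous_on_rhs integral_solD by blast

lemma is_sol_if_integral_sol:
  assumes T: "0 < T" and sol: "integral_sol T w w'"
  shows "is_sol p n f g v0 (ereal T) w w'"
  unfolding is_sol_def
proof (intro conjI ballI impI)
  note solD = integral_solD[OF sol]
  have I: "ivl0 (ereal T) = {0..<T}" by (auto simp: ivl0_def)
  show "0 < ereal T" using T by simp
  show "continuous_on (ivl0 (ereal T)) w'"
    unfolding I by (rule continuous_on_subset[OF solD(1)]) auto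
  show "w 0 = v0" using solD(4)[of 0] T by simp
  show "w' 0 = 0" by (rule solD(2))
  fix r assume "r \<in> ivl0 (ereal T)"
  then have r: "r \<in> {0..<T}" by (simp add: I)
  show "0 \<le> w' r" using solD(3) r by simp
  have "((\<lambda>x. v0 + integral {0..x} w') has_real_derivative w' r) (at r within {0..T})"
    using integral_has_real_derivative[OF solD(1)] r by (auto intro!: derivative_eq_intros)
  then have "((\<lambda>x. v0 + integral {0..x} w') has_real_derivative w' r) (at r within {0..<T})"
    by (rule has_field_derivative_subset) auto
  then show "(w has_real_derivative w' r) (at r within ivl0 (ereal T))"
    unfolding I by (rule has_field_derivative_transform_within[OF _ zero_less_one])
      (use r solD(4) in auto)
  assume r0: "0 < r"
  have "((\<lambda>x. integral {0..x} (rhs w w')) has_real_derivative rhs w w' r) (at r within {0..T})"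
    using integral_has_real_derivative[OF continuous_on_rhs_if_integral_sol[OF sol]] r by auto
  moreover have "at r within {0..T} = at r" using r0 r by (intro at_within_interior) auto
  ultimately have "((\<lambda>x. integral {0..x} (rhs w w')) has_real_derivative rhs w w' r) (at r)" by simp
  then have "((\<lambda>s. s ^ (n - 1) * w' s powr (p - 1)) has_real_derivative rhs w w' r) (at r)"
    by (rule has_field_derivative_transform_within_open[of _ _ _ "{0<..<T}"])
       (use r0 r solD(5) in auto)
  then show "((\<lambda>s. s ^ (n - 1) * w' s powr (p - 1)) has_real_derivative
      r ^ (n - 1) * (f (w r) + g (w' r))) (at r)"
    by (simp add: rhs_def)
qed

lemma integral_sol_glue:
  assumes T: "0 < T" "T \<le> T'" and sol: "integral_sol T w w'"
    and u'_cont: "continuous_on {T..T'} u'" and u'_T: "u' T = w' T"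
    and u'_nonneg: "\<And>x. x \<in> {T..T'} \<Longrightarrow> 0 \<le> u' x"
    and u_eq: "\<And>x. x \<in> {T..T'} \<Longrightarrow> u x = w T + integral {T..x} u'"
    and rhs_int: "\<And>x. x \<in> {T..T'} \<Longrightarrow> rhs u u' integrable_on {T..x}"
    and flux_eq: "\<And>x. x \<in> {T..T'} \<Longrightarrow>
      x ^ (n - 1) * u' x powr (p - 1) = T ^ (n - 1) * w' T powr (p - 1) + integral {T..x} (rhs u u')"
  shows "integral_sol T' (\<lambda>x. if x \<le> T then w x else u x) (\<lambda>x. if x \<le> T then w' x else u' x)"
    (is "integral_sol T' ?w2 ?w2'")
proof -
  note solD = integral_solD[OF sol]
  have T_mem: "T \<in> {0..T}" using T by simp
  have u_T: "u T = w T" using u_eq[of T] T by simp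
  have rhs_T: "rhs w w' T = rhs u u' T" by (simp add: rhs_def u_T u'_T)
  have rhs_w2: "rhs ?w2 ?w2' = (\<lambda>s. if s \<le> T then rhs w w' s else rhs u u' s)"
    by (auto simp: rhs_def fun_eq_iff)
  have w'_int: "w' integrable_on {0..T}" and rhs_w_int: "rhs w w' integrable_on {0..T}"
    using solD(1) continuous_on_rhs_if_integral_sol[OF sol] by (auto intro: integrable_continuous_real)
  show ?thesis
    unfolding integral_sol_def
  proof (intro conjI ballI)
    show "continuous_on {0..T'} ?w2'" by (rule continuous_on_Icc_glue[OF solD(1) u'_cont]) (simp add: u'_T)
    show "?w2' 0 = 0" using solD(2) T by simp
    fix x assume x: "x \<in> {0..T'}"
    show "0 \<le> ?w2' x" using solD(3) u'_nonneg x by auto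
    show "?w2 x = v0 + integral {0..x} ?w2'"
    proof (cases "x \<le> T")
      case True
      have "integral {0..x} ?w2' = integral {0..x} w'" by (rule integral_cong) (use True in auto)
      then show ?thesis using solD(4) x True by simp
    next
      case False
      have "integral {0..x} ?w2' = integral {0..T} w' + integral {T..x} u'"
        using T False x continuous_on_subset[OF u'_cont]
        by (intro integral_Icc_glue w'_int integrable_continuous_real) (auto simp: u'_T)
      then show ?thesis using False x solD(4)[OF T_mem] u_eq[of x] by simp
    qed
    show "x ^ (n - 1) * ?w2' x powr (p - 1) = integral {0..x} (rhs ?w2 ?w2')"
    proof (cases "x \<le> T")
      case True
      have "integral {0..x} (rhs ?w2 ?w2') = integral {0..x} (rhs w w')"
        unfolding rhs_w2 by (rule integral_cong) (use True in auto)
      then show ?thesis using solD(5)[of x] x True by simp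
    next
      case False
      have "integral {0..x} (rhs ?w2 ?w2') = integral {0..T} (rhs w w') + integral {T..x} (rhs u u')"
        unfolding rhs_w2 using T False x rhs_int[of x] rhs_T
        by (intro integral_Icc_glue rhs_w_int) auto
      then show ?thesis using False x solD(5)[OF T_mem] flux_eq[of x] by simp
    qed
  qed
qed

lemma integral_sol_continuation:
  assumes T: "0 < T" and sol: "integral_sol T w w'" and pos: "0 < w' T"
  obtains T' w2 w2' where "T < T'" and "integral_sol T' w2 w2'" and "\<And>x. x \<in> {0..T} \<Longrightarrow> w2 x = w x"
proof -
  define L where "L = T ^ (n - 1) * w' T powr (p - 1)"
  have L: "0 < L" unfolding L_def using T pos by simp
  have "v0 \<le> w T" by (rule primitive_ge_v0) (use integral_solD[OF sol] T in auto)
  then have "0 \<le> w T" using v0 by simp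
  then interpret C: continuation_system p n f g T "w T" L
    by unfold_locales (use p T L f_cont g_cont f_le g_le f_nonneg g_nonneg in auto)
  obtain V Y where slope_cont: "continuous_on C.J (C.slope Y)" and Y_ge: "\<And>r. r \<in> C.J \<Longrightarrow> L \<le> Y r"
    and source_int: "\<And>r. r \<in> C.J \<Longrightarrow> C.source V Y integrable_on {T..r}"
    and V_eq: "\<And>r. r \<in> C.J \<Longrightarrow> V r = w T + integral {T..r} (C.slope Y)"
    and Y_eq: "\<And>r. r \<in> C.J \<Longrightarrow> Y r = L + integral {T..r} (C.source V Y)"
    using C.integral_system_solvable by blast
  define T' where "T' = T + C.\<delta>"
  have TT': "T < T'" unfolding T'_def using C.\<delta>_pos by simp
  have J_eq: "C.J = {T..T'}" unfolding T'_def ..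
  have YT: "Y T = L" using Y_eq[of T] TT' J_eq by simp
  have slope_T: "C.slope Y T = w' T"
  proof -
    have "L / T ^ (n - 1) = w' T powr (p - 1)" unfolding L_def using T by simp
    then have "C.slope Y T = (w' T powr (p - 1)) powr (1 / (p - 1))"
      by (simp only: C.slope_def C.flux_inv_def YT)
    also have "\<dots> = w' T" using pos p by (simp add: powr_powr)
    finally show ?thesis .
  qed
  have rhs_eq: "rhs V (C.slope Y) = C.source V Y"
    by (simp add: rhs_def C.source_def fun_eq_iff)
  have slope_nonneg: "0 \<le> C.slope Y x" for x
    by (simp add: C.slope_def C.flux_inv_nonneg)
  have "integral_sol T' (\<lambda>x. if x \<le> T then w x else V x) (\<lambda>x. if x \<le> T then w' x else C.slope Y x)"
  proof (rule integral_sol_glue[OF T less_imp_le[OF TT'] sol])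
    fix x assume x: "x \<in> {T..T'}"
    have "0 < Y x" using Y_ge[of x] L x J_eq by fastforce
    then have "x ^ (n - 1) * C.slope Y x powr (p - 1) = Y x"
      using x T p by (simp add: C.slope_def C.flux_inv_def powr_powr)
    then show "x ^ (n - 1) * C.slope Y x powr (p - 1) =
        T ^ (n - 1) * w' T powr (p - 1) + integral {T..x} (rhs V (C.slope Y))"
      using Y_eq[of x] x J_eq unfolding rhs_eq L_def by simp
  qed (use slope_cont slope_T slope_nonneg V_eq source_int J_eq in \<open>auto simp: rhs_eq\<close>)
  then show ?thesis by (rule that[OF TT']) auto
qed

end

section \<open>Monotonicity and growth of solutions\<close>

locale radial_solution = radial_problem +
  fixes v v' :: "real \<Rightarrow> real" and R :: ereal
  assumes sol: "is_sol p n f g v0 R v v'"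
begin

abbreviation I :: "real set" where "I \<equiv> ivl0 R"

definition Phi :: "real \<Rightarrow> real" where "Phi s = s ^ (n - 1) * v' s powr (p - 1)"
definition psi :: "real \<Rightarrow> real" where "psi s = v' s powr (p - 1)"
definition h :: "real \<Rightarrow> real" where "h s = f (v s) + g (v' s)"

lemma R_pos: "0 < R"
  using sol by (simp add: is_sol_def)

lemma mem_I: "r \<in> I \<longleftrightarrow> 0 \<le> r \<and> ereal r < R"
  by (simp add: ivl0_def)

lemma zero_in_I: "0 \<in> I"
  using R_pos by (simp add: mem_I zero_ereal_def)

lemma mem_I_le: "r \<in> I \<Longrightarrow> 0 \<le> s \<Longrightarrow> s \<le> r \<Longrightarrow> s \<in> I"
  by (auto simp: mem_I) (meson ereal_less_eq(3) le_less_trans)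

lemma Icc_subset_I: "r \<in> I \<Longrightarrow> 0 \<le> s \<Longrightarrow> {s..r} \<subseteq> I"
  using mem_I_le by auto

lemma eventually_nhds_I:
  assumes "r \<in> I" "0 < r"
  shows "eventually (\<lambda>s. s \<in> I \<and> 0 < s) (nhds r)"
proof -
  have "open ({0<..} \<inter> {s. ereal s < R})" using open_ereal_less by (intro open_Int) auto
  moreover have "r \<in> {0<..} \<inter> {s. ereal s < R}" using assms by (auto simp: mem_I)
  ultimately show ?thesis
    by (rule eventually_nhds_in_open[THEN eventually_mono]) (auto simp: mem_I)
qed

lemma at_within_I:
  assumes "r \<in> I" "0 < r"
  shows "at r within I = at r"
proof -
  have "at r within I = at r within UNIV"
    by (rule at_within_nhd[of _ "{0<..} \<inter> {s. ereal s < R}"])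
       (use assms open_ereal_less in \<open>auto simp: mem_I\<close>)
  then show ?thesis by simp
qed

lemma v_has_derivative_within: "r \<in> I \<Longrightarrow> (v has_real_derivative v' r) (at r within I)"
  using sol by (simp add: is_sol_def)

lemma v_has_derivative: "r \<in> I \<Longrightarrow> 0 < r \<Longrightarrow> (v has_real_derivative v' r) (at r)"
  using v_has_derivative_within at_within_I by metis

lemma v'_cont: "continuous_on I v'"
  using sol by (simp add: is_sol_def)

lemma v_0: "v 0 = v0"
  using sol by (simp add: is_sol_def)

lemma v'_0: "v' 0 = 0"
  using sol by (simp add: is_sol_def)

lemma v'_nonneg: "r \<in> I \<Longrightarrow> 0 \<le> v' r"
  using sol by (simp add: is_sol_def)

lemma Phi_has_derivative: "r \<in> I \<Longrightarrow> 0 < r \<Longrightarrow> (Phi has_real_derivative r ^ (n - 1) * h r) (at r)"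
  using sol unfolding is_sol_def Phi_def h_def by blast

lemma v_cont: "continuous_on I v"
  using v_has_derivative_within by (meson DERIV_continuous continuous_on_eq_continuous_within)

lemma v_mono: assumes "r \<in> I" "0 \<le> s" "s \<le> r" shows "v s \<le> v r"
proof (rule DERIV_nonneg_imp_increasing_open[OF assms(3)])
  fix x assume "s < x" "x < r"
  then have "x \<in> I" "0 < x" using mem_I_le[OF assms(1)] assms by auto
  then show "\<exists>y. (v has_real_derivative y) (at x) \<and> 0 \<le> y"
    using v_has_derivative v'_nonneg by blast
qed (use continuous_on_subset[OF v_cont Icc_subset_I[OF assms(1,2)]] in simp)

lemma v_ge_v0: "r \<in> I \<Longrightarrow> v0 \<le> v r"
  using v_mono[of r 0] v_0 by (simp add: mem_I)

lemma v_pos: "r \<in> I \<Longrightarrow> 0 < v r"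
  using v_ge_v0 v0 by fastforce

lemma h_pos: "r \<in> I \<Longrightarrow> 0 < h r"
  unfolding h_def using f_pos[OF v_pos] g_nonneg[OF v'_nonneg] by (simp add: add_pos_nonneg)

lemma f_v_le_h: "r \<in> I \<Longrightarrow> f (v r) \<le> h r"
  unfolding h_def using g_nonneg v'_nonneg by simp

lemma g_v'_le_h: "r \<in> I \<Longrightarrow> g (v' r) \<le> h r"
  unfolding h_def using f_pos v_pos by (simp add: less_imp_le)

lemma f_v0_le_h: "r \<in> I \<Longrightarrow> f v0 \<le> h r"
  using f_v_le_h f_le v_ge_v0 v0 by (meson less_imp_le order_trans)

lemma Phi_cont: "continuous_on I Phi"
  unfolding Phi_def using p v'_nonneg
  by (intro continuous_intros continuous_on_powr' v'_cont) auto

lemma Phi_0: "Phi 0 = 0"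
  using p by (simp add: Phi_def v'_0)

lemma Phi_pos: assumes "r \<in> I" "0 < r" shows "0 < Phi r"
proof -
  have "\<exists>l z. 0 < z \<and> z < r \<and> DERIV Phi z :> l \<and> Phi r - Phi 0 = (r - 0) * l"
  proof (rule MVT)
    show "continuous_on {0..r} Phi"
      using continuous_on_subset[OF Phi_cont Icc_subset_I[OF assms(1)]] by simp
    show "Phi differentiable (at x)" if "0 < x" "x < r" for x
      using Phi_has_derivative mem_I_le[OF assms(1)] that real_differentiable_def by (meson less_imp_le)
  qed (use assms in auto)
  then obtain l z where z: "0 < z" "z < r" "DERIV Phi z :> l" "Phi r - Phi 0 = r * l" by auto
  have zI: "z \<in> I" using mem_I_le[OF assms(1)] z by auto
  have "l = z ^ (n - 1) * h z" using DERIV_unique[OF z(3) Phi_has_derivative[OF zI z(1)]] .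
  then have "0 < l" using h_pos[OF zI] z by simp
  then show ?thesis using z assms Phi_0 by simp
qed

lemma v'_pos: assumes "r \<in> I" "0 < r" shows "0 < v' r"
proof (rule ccontr)
  assume "\<not> 0 < v' r"
  then have "v' r = 0" using v'_nonneg[OF assms(1)] by simp
  then have "Phi r = 0" using p by (simp add: Phi_def)
  then show False using Phi_pos[OF assms] by simp
qed

lemma psi_pos: assumes "r \<in> I" "0 < r" shows "0 < psi r"
  using v'_pos[OF assms] by (simp add: psi_def)

lemma v'_eq_psi_powr: "r \<in> I \<Longrightarrow> v' r = psi r powr (1 / (p - 1))"
  using v'_nonneg p by (simp add: psi_def powr_powr)

definition dpsi :: "real \<Rightarrow> real" where "dpsi r = h r - (n - 1) * Phi r / r ^ n"

lemma psi_has_derivative: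
  assumes r: "r \<in> I" "0 < r"
  shows "(psi has_real_derivative dpsi r) (at r)"
proof -
  define m where "m = n - 1"
  have n_eq: "n = Suc m" using n unfolding m_def by simp
  have "((\<lambda>s. Phi s / s ^ m) has_real_derivative
      (r ^ m * h r * r ^ m - Phi r * (m * r ^ (m - 1))) / (r ^ m * r ^ m)) (at r)"
    using Phi_has_derivative[OF r] r(2) unfolding m_def[symmetric]
    by (auto intro!: derivative_eq_intros)
  moreover have "(r ^ m * h r * r ^ m - Phi r * (m * r ^ (m - 1))) / (r ^ m * r ^ m) = dpsi r"
  proof -
    have "Phi r * (m * r ^ (m - 1)) / (r ^ m * r ^ m) = real (n - 1) * Phi r / r ^ n"
    proof (cases m)
      case (Suc k)
      then have "n = Suc (Suc k)" "real (n - 1) = Suc k" using n_eq by simp_all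
      then show ?thesis using Suc r(2) by (simp add: field_simps)
    qed (simp add: m_def)
    moreover have "r ^ m * h r * r ^ m / (r ^ m * r ^ m) = h r" using r(2) by simp
    ultimately show ?thesis unfolding dpsi_def by (simp add: diff_divide_distrib)
  qed
  ultimately have deriv: "((\<lambda>s. Phi s / s ^ m) has_real_derivative dpsi r) (at r)" by simp
  have "eventually (\<lambda>s. psi s = Phi s / s ^ m) (nhds r)"
    using eventually_nhds_I[OF r] by eventually_elim (simp add: psi_def Phi_def m_def)
  then have "(psi has_real_derivative dpsi r) (at r) \<longleftrightarrow>
      ((\<lambda>s. Phi s / s ^ m) has_real_derivative dpsi r) (at r)"
    by (rule DERIV_cong_ev[OF refl _ refl])
  with deriv show ?thesis by simp
qed

lemma Phi_le_if_h_max: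
  assumes t: "t \<in> I" "0 < t" and h_max: "\<And>u. 0 \<le> u \<Longrightarrow> u \<le> t \<Longrightarrow> h u \<le> h t"
  shows "Phi t \<le> h t * t ^ n / n"
proof -
  define D where "D u = h t * u ^ n / n - Phi u" for u
  have "D 0 \<le> D t"
  proof (rule DERIV_nonneg_imp_increasing_open[OF less_imp_le[OF t(2)]])
    fix x assume x: "0 < x" "x < t"
    have xI: "x \<in> I" using mem_I_le[OF t(1)] x by auto
    have "(D has_real_derivative h t * (n * x ^ (n - 1)) / n - x ^ (n - 1) * h x) (at x)"
      unfolding D_def using Phi_has_derivative[OF xI x(1)] n by (intro derivative_eq_intros) auto
    moreover have "0 \<le> h t * (n * x ^ (n - 1)) / n - x ^ (n - 1) * h x"
      using n h_max[of x] x by (simp add: algebra_simps mult_left_mono)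
    ultimately show "\<exists>y. (D has_real_derivative y) (at x) \<and> 0 \<le> y" by blast
  next
    show "continuous_on {0..t} D" unfolding D_def
      using continuous_on_subset[OF Phi_cont Icc_subset_I[OF t(1)]] n by (intro continuous_intros) auto
  qed
  then show ?thesis using n Phi_0 by (simp add: D_def power_0_left)
qed

lemma dpsi_ge_if_h_max:
  assumes r: "r \<in> I" "0 < r" and h_max: "\<And>u. 0 \<le> u \<Longrightarrow> u \<le> r \<Longrightarrow> h u \<le> h r"
  shows "h r / n \<le> dpsi r"
proof -
  have "Phi r / r ^ n \<le> h r / n" using Phi_le_if_h_max[OF assms] r(2) by (simp add: field_simps)
  then have "real (n - 1) * (Phi r / r ^ n) \<le> real (n - 1) * (h r / n)"
    by (rule mult_left_mono) simp
  moreover have "real (n - 1) * (h r / n) = h r - h r / n" using n by (simp add: field_simps of_nat_diff)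
  moreover have "real (n - 1) * Phi r / r ^ n = real (n - 1) * (Phi r / r ^ n)" by simp
  ultimately show ?thesis unfolding dpsi_def by linarith
qed

text \<open>If v' were not monotone on [0, r], it would attain its maximum over [0, r] at some c with
  v' c > v' r; then h is maximal on [0, c] at c, so psi = v'^(p-1) is strictly increasing at c,
  contradicting maximality.\<close>
lemma v'_mono: assumes r: "r \<in> I" and s: "0 \<le> s" "s \<le> r" shows "v' s \<le> v' r"
proof (rule ccontr)
  assume contra: "\<not> v' s \<le> v' r"
  have "continuous_on {0..r} v'" using continuous_on_subset[OF v'_cont Icc_subset_I[OF r]] by simp
  moreover have "{0..r} \<noteq> {}" using s by auto
  ultimately obtain c where c: "c \<in> {0..r}" and c_max: "\<And>y. y \<in> {0..r} \<Longrightarrow> v' y \<le> v' c"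
    using continuous_attains_sup[OF compact_Icc] by blast
  have vc: "v' r < v' c" using c_max[of s] contra s by simp
  then have "c \<noteq> 0" using v'_0 v'_nonneg[OF r] by auto
  then have c0: "0 < c" "c < r" using c vc by (auto simp: less_le)
  have cI: "c \<in> I" using mem_I_le[OF r] c0 by auto
  have h_max: "h u \<le> h c" if "0 \<le> u" "u \<le> c" for u
  proof -
    have uI: "u \<in> I" using mem_I_le[OF cI] that by auto
    have "f (v u) \<le> f (v c)" using f_le v_mono[OF cI that] v_pos[OF uI] by auto
    moreover have "g (v' u) \<le> g (v' c)" using g_le c_max[of u] that c0 v'_nonneg[OF uI] by auto
    ultimately show ?thesis by (simp add: h_def)
  qed
  have "0 < h c / n" using h_pos[OF cI] n by simp
  then have "0 < dpsi c" using dpsi_ge_if_h_max[OF cI c0(1) h_max] by linarith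
  then obtain d where d: "d > 0" "\<And>e. e > 0 \<Longrightarrow> e < d \<Longrightarrow> psi c < psi (c + e)"
    using DERIV_pos_inc_right[OF psi_has_derivative[OF cI c0(1)]] by blast
  define e where "e = min (d / 2) ((r - c) / 2)"
  have "e \<le> (r - c) / 2" unfolding e_def by (rule min.cobounded2)
  then have e: "0 < e" "e < d" "c + e \<le> r" using d c0 by (auto simp: e_def)
  have ceI: "c + e \<in> I" using mem_I_le[OF r] e c0 by auto
  have "v' (c + e) \<le> v' c" using c_max e c0 by auto
  then have "psi (c + e) \<le> psi c"
    unfolding psi_def using p v'_nonneg[OF ceI] by (intro powr_mono2) auto
  moreover have "psi c < psi (c + e)" using d e by simp
  ultimately show False by simp
qed

lemma h_mono: assumes "r \<in> I" "0 \<le> u" "u \<le> r" shows "h u \<le> h r"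
proof -
  have uI: "u \<in> I" using mem_I_le assms by auto
  have "f (v u) \<le> f (v r)" using f_le v_mono[OF assms] v_pos[OF uI] by auto
  moreover have "g (v' u) \<le> g (v' r)" using g_le v'_mono[OF assms] v'_nonneg[OF uI] by auto
  ultimately show ?thesis by (simp add: h_def)
qed

lemma dpsi_ge: assumes "r \<in> I" "0 < r" shows "h r / n \<le> dpsi r"
  using dpsi_ge_if_h_max[OF assms h_mono[OF assms(1)]] .

lemma dpsi_le: assumes "r \<in> I" "0 < r" shows "dpsi r \<le> h r"
proof -
  have "0 \<le> real (n - 1) * Phi r / r ^ n"
    using Phi_pos[OF assms] assms(2) by (intro divide_nonneg_pos mult_nonneg_nonneg) auto
  then show ?thesis unfolding dpsi_def by linarith
qed

definition v'' :: "real \<Rightarrow> real" where "v'' r = v' r * dpsi r / ((p - 1) * psi r)"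

lemma v'_has_derivative:
  assumes r: "r \<in> I" "0 < r"
  shows "(v' has_real_derivative v'' r) (at r)"
proof -
  have ps: "0 < psi r" using psi_pos[OF r] .
  have "((\<lambda>s. psi s powr (1 / (p - 1))) has_real_derivative
          (1 / (p - 1)) * psi r powr (1 / (p - 1) - 1) * dpsi r) (at r)"
    by (rule DERIV_chain2[OF has_real_derivative_powr[OF ps] psi_has_derivative[OF r]])
  moreover have "psi r powr (1 / (p - 1) - 1) = v' r / psi r"
    using ps v'_eq_psi_powr[OF r(1)] by (simp add: powr_diff)
  ultimately have deriv: "((\<lambda>s. psi s powr (1 / (p - 1))) has_real_derivative v'' r) (at r)"
    unfolding v''_def by simp
  have "eventually (\<lambda>s. v' s = psi s powr (1 / (p - 1))) (nhds r)"
    using eventually_nhds_I[OF r] by eventually_elim (simp add: v'_eq_psi_powr)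
  then have "(v' has_real_derivative v'' r) (at r) \<longleftrightarrow>
      ((\<lambda>s. psi s powr (1 / (p - 1))) has_real_derivative v'' r) (at r)"
    by (rule DERIV_cong_ev[OF refl _ refl])
  with deriv show ?thesis by simp
qed

lemma v''_mult_psi:
  assumes "r \<in> I" "0 < r"
  shows "v'' r * psi r = v' r * dpsi r / (p - 1)"
proof -
  have "psi r \<noteq> 0" "p - 1 \<noteq> 0" using psi_pos[OF assms] p by auto
  then show ?thesis unfolding v''_def by (simp add: field_simps)
qed

end

section \<open>Finite-time blow-up\<close>

context radial_problem
begin

lemma prim_has_derivative: "0 < t \<Longrightarrow> (prim f has_real_derivative f t) (at t)"
  unfolding prim_def[abs_def] by (rule integral_Icc_has_real_derivative[OF f_cont])

lemma prim_pos: assumes "0 < t" shows "0 < prim f t"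
proof -
  have "0 \<le> prim f x" if "0 \<le> x" for x
    unfolding prim_def using f_nonneg continuous_on_subset[OF f_cont]
    by (intro integral_nonneg integrable_continuous_real) auto
  have "prim f (t / 2) + (t - t / 2) * f (t / 2) \<le> prim f t"
  proof -
    have "prim f (t / 2) - t / 2 * f (t / 2) \<le> prim f t - t * f (t / 2)"
    proof (rule deriv_nonneg_imp_le[of "t / 2" t _ "\<lambda>x. f x - f (t / 2)"])
      fix x assume x: "t / 2 \<le> x" "x \<le> t"
      show "((\<lambda>x. prim f x - x * f (t / 2)) has_real_derivative f x - f (t / 2)) (at x)"
        using prim_has_derivative[of x] x assms by (auto intro!: derivative_eq_intros)
      show "0 \<le> f x - f (t / 2)" using f_le[of "t / 2" x] x assms by simp
    qed (use assms in simp)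
    then show ?thesis by (simp add: algebra_simps)
  qed
  moreover have "0 \<le> prim f (t / 2)" using \<open>\<And>x. 0 \<le> x \<Longrightarrow> 0 \<le> prim f x\<close> assms by simp
  moreover have "0 < (t - t / 2) * f (t / 2)" using assms f_pos[of "t / 2"] by simp
  ultimately show ?thesis by linarith
qed

lemma prim_ge_linear: assumes "1 \<le> t" shows "(t - 1) * f 1 \<le> prim f t"
proof -
  have "prim f 1 - 1 * f 1 \<le> prim f t - t * f 1"
  proof (rule deriv_nonneg_imp_le[OF assms, of _ "\<lambda>x. f x - f 1"])
    fix x assume x: "1 \<le> x" "x \<le> t"
    show "((\<lambda>x. prim f x - x * f 1) has_real_derivative f x - f 1) (at x)"
      using prim_has_derivative[of x] x by (auto intro!: derivative_eq_intros)
    show "0 \<le> f x - f 1" using f_le[of 1 x] x by simp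
  qed
  then show ?thesis using prim_pos[of 1] by (simp add: algebra_simps)
qed

end

context radial_solution
begin

lemma psi_ge_linear:
  assumes r0: "r0 \<in> I" "0 < r0" and r: "r0 \<le> r" "r \<in> I"
  shows "psi r0 + (r - r0) * f v0 / n \<le> psi r"
proof -
  have "psi r0 - r0 * f v0 / n \<le> psi r - r * f v0 / n"
  proof (rule deriv_nonneg_imp_le[OF r(1), of _ "\<lambda>x. dpsi x - f v0 / n"])
    fix x assume x: "r0 \<le> x" "x \<le> r"
    have xI: "x \<in> I" "0 < x" using mem_I_le[OF r(2)] x r0 by auto
    show "((\<lambda>x. psi x - x * f v0 / n) has_real_derivative dpsi x - f v0 / n) (at x)"
      using psi_has_derivative[OF xI] n by (auto intro!: derivative_eq_intros)
    have "f v0 / n \<le> h x / n" using f_v0_le_h[OF xI(1)] by (simp add: divide_right_mono)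
    then show "0 \<le> dpsi x - f v0 / n" using dpsi_ge[OF xI] by simp
  qed
  then show ?thesis by (simp add: algebra_simps diff_divide_distrib)
qed

lemma v_ge_tangent:
  assumes r0: "r0 \<in> I" "0 < r0" and r: "r0 \<le> r" "r \<in> I"
  shows "v r0 + (r - r0) * v' r0 \<le> v r"
proof -
  have "v r0 - r0 * v' r0 \<le> v r - r * v' r0"
  proof (rule deriv_nonneg_imp_le[OF r(1), of _ "\<lambda>x. v' x - v' r0"])
    fix x assume x: "r0 \<le> x" "x \<le> r"
    have xI: "x \<in> I" "0 < x" using mem_I_le[OF r(2)] x r0 by auto
    show "((\<lambda>x. v x - x * v' r0) has_real_derivative v' x - v' r0) (at x)"
      using v_has_derivative[OF xI] by (auto intro!: derivative_eq_intros)
    show "0 \<le> v' x - v' r0" using v'_mono[OF xI(1)] x r0 by simp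
  qed
  then show ?thesis by (simp add: algebra_simps)
qed

lemma psi_mult_v''_div_g_ge:
  assumes r: "r \<in> I" "0 < r"
  shows "v' r / (n * (p - 1)) \<le> psi r * v'' r / g (v' r)"
proof -
  have g: "0 < g (v' r)" using g_pos v'_pos[OF r] by simp
  have "g (v' r) / n \<le> dpsi r"
    using dpsi_ge[OF r] g_v'_le_h[OF r(1)] n by (meson divide_right_mono of_nat_0_le_iff order_trans)
  then have "v' r * (g (v' r) / n) / ((p - 1) * g (v' r)) \<le> v' r * dpsi r / ((p - 1) * g (v' r))"
    using g p v'_pos[OF r] by (intro divide_right_mono mult_left_mono) auto
  moreover have "v' r * (g (v' r) / n) / ((p - 1) * g (v' r)) = v' r / (n * (p - 1))"
    using g by simp
  moreover have "psi r * v'' r / g (v' r) = v' r * dpsi r / ((p - 1) * g (v' r))"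
    using v''_mult_psi[OF r] by (simp add: mult.commute)
  ultimately show ?thesis by simp
qed

lemma powr_mult_v''_div_g_ge:
  assumes r: "r \<in> I" "0 < r"
  shows "1 / (n * (p - 1)) \<le> v' r powr (p - 2) * v'' r / g (v' r)"
proof -
  have v': "0 < v' r" using v'_pos[OF r] .
  have "v' r powr (p - 2) = v' r powr ((p - 1) - 1)" by simp
  also have "\<dots> = psi r / v' r" unfolding psi_def using v' by (simp add: powr_diff power2_eq_square)
  finally have "v' r powr (p - 2) = psi r / v' r" .
  then have "v' r powr (p - 2) * v'' r / g (v' r) = (psi r * v'' r / g (v' r)) / v' r" by simp
  moreover have "v' r / (n * (p - 1)) / v' r \<le> (psi r * v'' r / g (v' r)) / v' r"
    using psi_mult_v''_div_g_ge[OF r] v' by (intro divide_right_mono) auto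
  ultimately show ?thesis using v' by simp
qed

lemma exists_v'_gt_1_if_R_infinite:
  assumes R: "R = \<infinity>"
  obtains r1 where "1 \<le> r1" and "1 < v' r1"
proof -
  have inI: "0 \<le> r \<Longrightarrow> r \<in> I" for r using R by (simp add: ivl0_def)
  have fv0: "0 < f v0" using f_pos v0 by simp
  define r1 where "r1 = 1 + n * (2 + \<bar>psi 1\<bar>) / f v0"
  have r1: "1 \<le> r1" unfolding r1_def using fv0 by simp
  have "psi 1 + (r1 - 1) * f v0 / n \<le> psi r1" using psi_ge_linear[OF inI _ r1 inI] r1 by simp
  moreover have "(r1 - 1) * f v0 / n = 2 + \<bar>psi 1\<bar>" unfolding r1_def using fv0 n by simp
  ultimately have "psi 1 + (2 + \<bar>psi 1\<bar>) \<le> psi r1" by simp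
  then have "1 < psi r1" by (simp add: abs_if split: if_splits)
  then have "1 < v' r1" using v'_eq_psi_powr[OF inI] r1 p by simp
  with r1 show ?thesis by (rule that)
qed

lemma R_finite_if_g_growth:
  assumes fin: "(\<integral>\<^sup>+ s\<in>{1..}. ennreal (s powr (p - 2) / g s) \<partial>lborel) < \<infinity>"
  shows "R \<noteq> \<infinity>"
proof
  assume R: "R = \<infinity>"
  then have inI: "0 \<le> r \<Longrightarrow> r \<in> I" for r by (simp add: ivl0_def)
  define H where "H t = t powr (p - 2) / g t" for t
  have "continuous_on {1..} g" by (rule continuous_on_subset[OF g_cont]) auto
  then have H_cont: "continuous_on {1..} H"
    unfolding H_def using g_pos by (intro continuous_intros) (auto simp: less_imp_neq[symmetric])
  have H_nonneg: "0 \<le> H x" if "1 \<le> x" for x unfolding H_def using g_pos[of x] that by simp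
  obtain T where T_nonneg: "\<And>x. 1 \<le> x \<Longrightarrow> 0 \<le> T x"
    and T_deriv: "\<And>x. 1 < x \<Longrightarrow> (T has_real_derivative - H x) (at x)"
    using nonneg_tail_primitive[OF H_cont H_nonneg fin[folded H_def]] by blast
  obtain r1 where r1: "1 \<le> r1" "1 < v' r1" using exists_v'_gt_1_if_R_infinite[OF R] by blast
  have v'_gt_1: "1 < v' x" if "r1 \<le> x" for x using v'_mono[OF inI, of x r1] r1 that by simp
  have "\<exists>x\<ge>r1. T (v' x) < 0"
  proof (rule unbounded_below_if_deriv_le_neg)
    show "0 < 1 / (n * (p - 1))" using n p by simp
    fix x assume x: "r1 \<le> x"
    have xI: "x \<in> I" "0 < x" using inI r1 x by auto
    show "((\<lambda>x. T (v' x)) has_real_derivative - H (v' x) * v'' x) (at x)"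
      using DERIV_chain2[OF T_deriv[OF v'_gt_1[OF x]] v'_has_derivative[OF xI]] by simp
    have "H (v' x) * v'' x = v' x powr (p - 2) * v'' x / g (v' x)" unfolding H_def by simp
    then show "- H (v' x) * v'' x \<le> - (1 / (n * (p - 1)))"
      using powr_mult_v''_div_g_ge[OF xI] by linarith
  qed
  then obtain x where "r1 \<le> x" "T (v' x) < 0" by blast
  with T_nonneg[of "v' x"] v'_gt_1[of x] show False by simp
qed

end

context radial_solution
begin

lemma energy_mono:
  assumes r0: "r0 \<in> I" "0 < r0" and r: "r0 \<le> r" "r \<in> I"
  shows "(p - 1) / p * v' r0 powr p - prim f (v r0) / n \<le> (p - 1) / p * v' r powr p - prim f (v r) / n"
proof (rule deriv_nonneg_imp_le[OF r(1), of _ "\<lambda>y. v' y * dpsi y - f (v y) * v' y / n"])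
  fix y assume y: "r0 \<le> y" "y \<le> r"
  have yI: "y \<in> I" "0 < y" using mem_I_le[OF r(2)] y r0 by auto
  have v': "0 < v' y" using v'_pos[OF yI] .
  have "((\<lambda>y. v' y powr p) has_real_derivative p * v' y powr (p - 1) * v'' y) (at y)"
    using DERIV_chain2[OF has_real_derivative_powr[OF v'] v'_has_derivative[OF yI]] by simp
  moreover have "((\<lambda>y. prim f (v y)) has_real_derivative f (v y) * v' y) (at y)"
    using DERIV_chain2[OF prim_has_derivative[OF v_pos[OF yI(1)]] v_has_derivative[OF yI]] by simp
  ultimately have deriv: "((\<lambda>y. (p - 1) / p * v' y powr p - prim f (v y) / n) has_real_derivative
      (p - 1) / p * (p * v' y powr (p - 1) * v'' y) - f (v y) * v' y / n) (at y)"
    by (intro DERIV_diff DERIV_cmult DERIV_cdivide)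
  have "(p - 1) / p * (p * v' y powr (p - 1) * v'' y) = (p - 1) * (v'' y * psi y)"
    using p by (simp add: psi_def)
  also have "\<dots> = v' y * dpsi y" using v''_mult_psi[OF yI] p by simp
  finally show "((\<lambda>y. (p - 1) / p * v' y powr p - prim f (v y) / n) has_real_derivative
      v' y * dpsi y - f (v y) * v' y / n) (at y)"
    using deriv by simp
  have "f (v y) / n \<le> dpsi y"
    using dpsi_ge[OF yI] f_v_le_h[OF yI(1)] n by (meson divide_right_mono of_nat_0_le_iff order_trans)
  then have "v' y * (f (v y) / n) \<le> v' y * dpsi y" using v' by (intro mult_left_mono) auto
  moreover have "f (v y) * v' y / n = v' y * (f (v y) / n)" by simp
  ultimately show "0 \<le> v' y * dpsi y - f (v y) * v' y / n" by linarith
qed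

lemma v'_ge_prim_root_if_R_infinite:
  assumes R: "R = \<infinity>"
  obtains r2 c where "1 \<le> r2" and "0 < c"
    and "\<And>x. r2 \<le> x \<Longrightarrow> 1 < v x \<and> c * prim f (v x) powr (1 / p) \<le> v' x"
proof -
  have inI: "0 \<le> r \<Longrightarrow> r \<in> I" for r using R by (simp add: ivl0_def)
  have v'1: "0 < v' 1" using v'_pos[OF inI] by simp
  have f1: "0 < f 1" using f_pos by simp
  have Fv1: "0 < prim f (v 1)" using prim_pos v_pos[OF inI] by simp
  define r2 where "r2 = 1 + ((2 * prim f (v 1) + 1) / f 1 + 1) / v' 1"
  have r2: "1 \<le> r2" unfolding r2_def using v'1 f1 Fv1 by simp
  define c where "c = p / (2 * n * (p - 1))"
  have c: "0 < c" unfolding c_def using p n by simp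
  have "1 < v x \<and> c powr (1 / p) * prim f (v x) powr (1 / p) \<le> v' x" if x: "r2 \<le> x" for x
  proof -
    have xI: "x \<in> I" "0 < x" using inI x r2 by auto
    have "v 1 + (x - 1) * v' 1 \<le> v x" using v_ge_tangent[OF inI _ _ xI(1)] x r2 by simp
    moreover have "(r2 - 1) * v' 1 \<le> (x - 1) * v' 1" using x v'1 by (intro mult_right_mono) auto
    moreover have "(r2 - 1) * v' 1 = (2 * prim f (v 1) + 1) / f 1 + 1" unfolding r2_def using v'1 by simp
    ultimately have vx: "1 + (2 * prim f (v 1) + 1) / f 1 \<le> v x" using v_pos[OF inI, of 1] by linarith
    moreover have "0 < (2 * prim f (v 1) + 1) / f 1" using f1 Fv1 by simp
    ultimately have v_gt_1: "1 < v x" by linarith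
    have "(2 * prim f (v 1) + 1) / f 1 * f 1 \<le> (v x - 1) * f 1"
      using vx f1 by (intro mult_right_mono) auto
    then have "2 * prim f (v 1) + 1 \<le> prim f (v x)"
      using prim_ge_linear[of "v x"] v_gt_1 f1 by simp
    then have "prim f (v x) / 2 / n \<le> (prim f (v x) - prim f (v 1)) / n"
      using n by (intro divide_right_mono) auto
    also have "\<dots> \<le> (p - 1) / p * v' x powr p"
    proof -
      have "(p - 1) / p * v' 1 powr p - prim f (v 1) / n \<le> (p - 1) / p * v' x powr p - prim f (v x) / n"
        using energy_mono[OF inI _ _ xI(1), of 1] x r2 by simp
      moreover have "0 \<le> (p - 1) / p * v' 1 powr p" using p by simp
      ultimately show ?thesis by (simp only: diff_divide_distrib)
    qed
    finally have "c * prim f (v x) \<le> v' x powr p" unfolding c_def using p n by (simp add: field_simps)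
    then have "(c * prim f (v x)) powr (1 / p) \<le> (v' x powr p) powr (1 / p)"
      using c prim_pos[of "v x"] v_gt_1 p by (intro powr_mono2) auto
    also have "\<dots> = v' x" using v'_nonneg[OF xI(1)] p by (simp add: powr_powr)
    finally show ?thesis using v_gt_1 c prim_pos[of "v x"] by (simp add: powr_mult)
  qed
  then show ?thesis using that[OF r2, of "c powr (1 / p)"] c by simp
qed

lemma R_finite_if_F_growth:
  assumes fin: "(\<integral>\<^sup>+ s\<in>{1..}. ennreal (1 / (prim f s) powr (1 / p)) \<partial>lborel) < \<infinity>"
  shows "R \<noteq> \<infinity>"
proof
  assume R: "R = \<infinity>"
  then have inI: "0 \<le> r \<Longrightarrow> r \<in> I" for r by (simp add: ivl0_def)
  define H where "H t = 1 / (prim f t) powr (1 / p)" for t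
  have "continuous_on {1..} (prim f)"
    by (intro continuous_at_imp_continuous_on ballI DERIV_isCont[OF prim_has_derivative]) auto
  then have H_cont: "continuous_on {1..} H"
    unfolding H_def using prim_pos by (intro continuous_intros) (auto simp: less_imp_neq[symmetric])
  have H_nonneg: "0 \<le> H x" for x unfolding H_def by simp
  obtain T where T_nonneg: "\<And>x. 1 \<le> x \<Longrightarrow> 0 \<le> T x"
    and T_deriv: "\<And>x. 1 < x \<Longrightarrow> (T has_real_derivative - H x) (at x)"
    using nonneg_tail_primitive[OF H_cont H_nonneg fin[folded H_def]] by blast
  obtain r2 c where r2: "1 \<le> r2" and c: "0 < c"
    and growth: "\<And>x. r2 \<le> x \<Longrightarrow> 1 < v x \<and> c * prim f (v x) powr (1 / p) \<le> v' x"
    using v'_ge_prim_root_if_R_infinite[OF R] by blast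
  have "\<exists>x\<ge>r2. T (v x) < 0"
  proof (rule unbounded_below_if_deriv_le_neg[OF c])
    fix x assume x: "r2 \<le> x"
    have xI: "x \<in> I" "0 < x" using inI r2 x by auto
    show "((\<lambda>x. T (v x)) has_real_derivative - H (v x) * v' x) (at x)"
      using DERIV_chain2[OF T_deriv v_has_derivative[OF xI]] growth[OF x] by simp
    have "0 < prim f (v x) powr (1 / p)" using prim_pos[of "v x"] growth[OF x] by simp
    then have "c \<le> H (v x) * v' x" using growth[OF x] unfolding H_def by (simp add: field_simps)
    then show "- H (v x) * v' x \<le> - c" by simp
  qed
  then obtain x where "r2 \<le> x" "T (v x) < 0" by blast
  with T_nonneg[of "v x"] growth[of x] show False by simp
qed

end

section \<open>Behaviour of v at the blow-up radius\<close>

context radial_solution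
begin

lemma I_eq: "R = ereal Rr \<Longrightarrow> I = {0..<Rr}"
  by (auto simp: ivl0_def)

lemma mono_on_v: "R = ereal Rr \<Longrightarrow> mono_on {0..<Rr} v"
  using v_mono I_eq by (intro mono_onI) auto

lemma mono_on_v': "R = ereal Rr \<Longrightarrow> mono_on {0..<Rr} v'"
  using v'_mono I_eq by (intro mono_onI) auto

lemma exists_v'_gt:
  assumes R: "R = ereal Rr" and lim: "filterlim v' at_top (at_left Rr)" and M: "0 \<le> M"
  obtains r where "r \<in> I" "0 < r" "M < v' r"
proof -
  have Rr: "0 < Rr" using R_pos R by simp
  obtain r where "r \<in> {0..<Rr}" "M < v' r"
    using lim filterlim_at_top_at_left_iff_unbounded[OF Rr mono_on_v'[OF R]] by blast
  moreover have "r \<noteq> 0" using \<open>M < v' r\<close> M v'_0 by auto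
  ultimately show ?thesis using that I_eq[OF R] by auto
qed

lemma v_bounded_if_g_integrable:
  assumes R: "R = ereal Rr" and lim: "filterlim v' at_top (at_left Rr)"
    and fin: "(\<integral>\<^sup>+ s\<in>{1..}. ennreal (s powr (p - 1) / g s) \<partial>lborel) < \<infinity>"
  shows "\<exists>M. \<forall>x\<in>I. v x \<le> M"
proof -
  define H where "H t = t powr (p - 1) / g t" for t
  have "continuous_on {1..} g" by (rule continuous_on_subset[OF g_cont]) auto
  then have H_cont: "continuous_on {1..} H"
    unfolding H_def using g_pos by (intro continuous_intros) (auto simp: less_imp_neq[symmetric])
  have H_nonneg: "0 \<le> H x" if "1 \<le> x" for x unfolding H_def using g_pos[of x] that by simp
  obtain T where T_nonneg: "\<And>x. 1 \<le> x \<Longrightarrow> 0 \<le> T x"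
    and T_deriv: "\<And>x. 1 < x \<Longrightarrow> (T has_real_derivative - H x) (at x)"
    using nonneg_tail_primitive[OF H_cont H_nonneg fin[folded H_def]] by blast
  obtain r1 where r1: "r1 \<in> I" "0 < r1" "1 < v' r1" using exists_v'_gt[OF R lim, of 1] by auto
  define c where "c = 1 / (n * (p - 1))"
  have c: "0 < c" unfolding c_def using n p by simp
  define Z where "Z x = T (v' x) + c * v x" for x
  have Z_le: "Z x \<le> Z r1" if x: "x \<in> I" "r1 \<le> x" for x
  proof (rule deriv_nonpos_imp_ge[OF x(2), of _ "\<lambda>y. - H (v' y) * v'' y + c * v' y"])
    fix y assume y: "r1 \<le> y" "y \<le> x"
    have yI: "y \<in> I" "0 < y" using mem_I_le[OF x(1)] r1 y by auto
    have v'y: "1 < v' y" using v'_mono[OF yI(1), of r1] r1 y by simp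
    show "(Z has_real_derivative - H (v' y) * v'' y + c * v' y) (at y)"
      unfolding Z_def using DERIV_chain2[OF T_deriv[OF v'y] v'_has_derivative[OF yI]] v_has_derivative[OF yI]
      by (auto intro!: derivative_eq_intros)
    have "H (v' y) * v'' y = psi y * v'' y / g (v' y)" unfolding H_def psi_def by simp
    then show "- H (v' y) * v'' y + c * v' y \<le> 0"
      using psi_mult_v''_div_g_ge[OF yI] unfolding c_def by simp
  qed
  have "v x \<le> max (v r1) (Z r1 / c)" if x: "x \<in> I" for x
  proof (cases "x \<le> r1")
    case True
    then show ?thesis using v_mono[OF r1(1), of x] x by (simp add: mem_I)
  next
    case False
    have "1 < v' x" using v'_mono[OF x, of r1] r1 False by simp
    then have "c * v x \<le> Z r1" using Z_le[OF x] False T_nonneg[of "v' x"] unfolding Z_def by simp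
    then have "v x \<le> Z r1 / c" using c by (simp add: field_simps)
    then show ?thesis by simp
  qed
  then show ?thesis by blast
qed

lemma integral_at_v'_le_if_v_bounded:
  assumes vM: "\<And>x. x \<in> I \<Longrightarrow> v x \<le> M" and r1: "r1 \<in> I" "0 < r1" "1 < v' r1"
    and x: "x \<in> I" "r1 \<le> x"
  defines "H \<equiv> \<lambda>t. t powr (p - 1) / (f M + g t)"
  shows "integral {1..v' x} H \<le> integral {1..v' r1} H + (M - v r1) / (p - 1)"
proof -
  have fM: "0 < f M" using f_pos vM[OF zero_in_I] v_0 v0 by simp
  have "continuous_on {1..} g" by (rule continuous_on_subset[OF g_cont]) auto
  then have H_cont: "continuous_on {1..} H"
    unfolding H_def using g_pos fM by (auto intro!: continuous_intros simp: add_pos_pos less_imp_neq[symmetric])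
  have "integral {1..v' x} H - v x / (p - 1) \<le> integral {1..v' r1} H - v r1 / (p - 1)"
  proof (rule deriv_nonpos_imp_ge[OF x(2), of _ "\<lambda>y. H (v' y) * v'' y - v' y / (p - 1)"])
    fix y assume y: "r1 \<le> y" "y \<le> x"
    have yI: "y \<in> I" "0 < y" using mem_I_le[OF x(1)] r1 y by auto
    have v'y: "1 < v' y" using v'_mono[OF yI(1), of r1] r1 y by simp
    show "((\<lambda>x. integral {1..v' x} H - v x / (p - 1)) has_real_derivative H (v' y) * v'' y - v' y / (p - 1)) (at y)"
      using DERIV_chain2[OF integral_Icc_has_real_derivative[OF H_cont v'y] v'_has_derivative[OF yI]]
        v_has_derivative[OF yI] p
      by (auto intro!: derivative_eq_intros)
    have pos: "0 < f M + g (v' y)" using g_pos[of "v' y"] v'y fM by simp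
    have "dpsi y \<le> f M + g (v' y)"
      using dpsi_le[OF yI] f_le[of "v y" M] v_pos[OF yI(1)] vM[OF yI(1)] unfolding h_def by simp
    have "H (v' y) * v'' y = (v' y * dpsi y / (p - 1)) / (f M + g (v' y))"
      using v''_mult_psi[OF yI] unfolding H_def psi_def by (simp add: mult.commute)
    also have "\<dots> \<le> (v' y * (f M + g (v' y)) / (p - 1)) / (f M + g (v' y))"
      using \<open>dpsi y \<le> f M + g (v' y)\<close> v'y p pos
      by (intro divide_right_mono mult_left_mono) auto
    also have "\<dots> = v' y / (p - 1)" using pos by simp
    finally show "H (v' y) * v'' y - v' y / (p - 1) \<le> 0" by simp
  qed
  moreover have "v x / (p - 1) \<le> M / (p - 1)" using vM[OF x(1)] p by (simp add: divide_right_mono)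
  ultimately show ?thesis by (simp add: diff_divide_distrib)
qed

lemma v_unbounded_if_g_not_integrable:
  assumes R: "R = ereal Rr" and lim: "filterlim v' at_top (at_left Rr)"
    and inf: "(\<integral>\<^sup>+ s\<in>{1..}. ennreal (s powr (p - 1) / g s) \<partial>lborel) = \<infinity>"
  shows "\<exists>x\<in>I. M < v x"
proof (rule ccontr)
  assume "\<not> ?thesis"
  then have vM: "\<And>x. x \<in> I \<Longrightarrow> v x \<le> M" by auto
  have fM: "0 < f M" using f_pos vM[OF zero_in_I] v_0 v0 by simp
  define H where "H t = t powr (p - 1) / g t" for t
  define H2 where "H2 t = t powr (p - 1) / (f M + g t)" for t
  define C where "C = 1 + f M / g 1"
  have C: "0 < C" unfolding C_def using fM g_pos[of 1] by (simp add: add_pos_pos)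
  have "continuous_on {1..} g" by (rule continuous_on_subset[OF g_cont]) auto
  then have H_cont: "continuous_on {1..} H" and H2_cont: "continuous_on {1..} H2"
    unfolding H_def H2_def using g_pos fM
    by (auto intro!: continuous_intros simp: less_imp_neq[symmetric] add_pos_pos)
  have H_nonneg: "0 \<le> H x" if "1 \<le> x" for x unfolding H_def using g_pos[of x] that by simp
  have H_le_H2: "H t \<le> C * H2 t" if "1 \<le> t" for t
    unfolding H_def H2_def C_def using powr_div_g_le_shifted[OF less_imp_le[OF fM] that] .
  obtain r1 where r1: "r1 \<in> I" "0 < r1" "1 < v' r1" using exists_v'_gt[OF R lim, of 1] by auto
  have bound: "integral {1..y} H \<le> C * (integral {1..v' r1} H2 + (M - v r1) / (p - 1))"
    if y: "1 \<le> y" for y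
  proof -
    obtain x0 where x0: "x0 \<in> I" "0 < x0" "y < v' x0" using exists_v'_gt[OF R lim, of y] y by auto
    define x where "x = max x0 r1"
    have xI: "x \<in> I" and r1x: "r1 \<le> x" using x0 r1 by (auto simp: x_def max_def)
    have yx: "y \<le> v' x" using v'_mono[OF xI, of x0] x0 by (simp add: x_def mem_I)
    have int: "H integrable_on {1..t}" "H2 integrable_on {1..t}" for t
      using continuous_on_subset[OF H_cont] continuous_on_subset[OF H2_cont]
      by (auto intro!: integrable_continuous_real)
    have "integral {1..y} H \<le> integral {1..v' x} H"
      using yx H_nonneg by (intro integral_subset_le int) auto
    also have "\<dots> \<le> integral {1..v' x} (\<lambda>t. C * H2 t)"
      using H_le_H2 integrable_on_cmult_left[OF int(2), of C] by (intro integral_le int) auto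
    also have "\<dots> = C * integral {1..v' x} H2" by simp
    also have "\<dots> \<le> C * (integral {1..v' r1} H2 + (M - v r1) / (p - 1))"
      using integral_at_v'_le_if_v_bounded[OF vM r1 xI r1x] C unfolding H2_def[abs_def]
      by (intro mult_left_mono) auto
    finally show ?thesis .
  qed
  have "(\<integral>\<^sup>+ s\<in>{1..}. ennreal (H s) \<partial>lborel) < \<infinity>"
    by (rule nn_integral_finite_if_integral_Icc_bounded[OF H_cont H_nonneg bound])
  then show False using inf unfolding H_def by simp
qed

end

section \<open>Maximal solutions\<close>

context radial_solution
begin

lemma v_eq_integral: assumes x: "x \<in> I" shows "v x = v0 + integral {0..x} v'"
proof -
  have "(v' has_integral (v x - v 0)) {0..x}"
  proof (rule fundamental_theorem_of_calculus)
    show "0 \<le> x" using x by (simp add: mem_I)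
    fix y assume "y \<in> {0..x}"
    then have "y \<in> I" using mem_I_le[OF x] by auto
    then have "(v has_real_derivative v' y) (at y within {0..x})"
      using v_has_derivative_within has_field_derivative_subset Icc_subset_I[OF x] by blast
    then show "(v has_vector_derivative v' y) (at y within {0..x})"
      using has_real_derivative_iff_has_vector_derivative by blast
  qed
  then show ?thesis using v_0 by (simp add: integral_unique)
qed

lemma Phi_eq_integral: assumes x: "x \<in> I" shows "Phi x = integral {0..x} (rhs v v')"
proof -
  have "(rhs v v' has_integral (Phi x - Phi 0)) {0..x}"
  proof (rule fundamental_theorem_of_calculus_interior)
    show "0 \<le> x" using x by (simp add: mem_I)
    show "continuous_on {0..x} Phi" using continuous_on_subset[OF Phi_cont Icc_subset_I[OF x]] by simp
    fix y assume "y \<in> {0<..<x}"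
    then have "y \<in> I" "0 < y" using mem_I_le[OF x] by auto
    then show "(Phi has_vector_derivative rhs v v' y) (at y)"
      using Phi_has_derivative has_real_derivative_iff_has_vector_derivative
      unfolding rhs_def h_def[symmetric] by blast
  qed
  then show ?thesis using Phi_0 by (simp add: integral_unique)
qed

lemma v'_tendsto_at_R_if_bounded:
  assumes R: "R = ereal Rr" and bounded: "\<And>x. x \<in> I \<Longrightarrow> v' x \<le> A"
  obtains a where "0 < a" and "(v' \<longlongrightarrow> a) (at_left Rr)" and "\<And>x. x \<in> I \<Longrightarrow> v' x \<le> a"
proof -
  have Rr: "0 < Rr" using R_pos R by simp
  obtain a where lim: "(v' \<longlongrightarrow> a) (at_left Rr)" and le_a: "\<And>x. x \<in> {0..<Rr} \<Longrightarrow> v' x \<le> a"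
    using mono_on_bounded_tendsto_at_left[OF Rr mono_on_v'[OF R]] bounded I_eq[OF R] by blast
  have "0 < a" using v'_pos[of "Rr / 2"] le_a[of "Rr / 2"] Rr I_eq[OF R] by simp
  with lim show ?thesis using that le_a I_eq[OF R] by blast
qed

lemma integral_sol_at_R:
  assumes R: "R = ereal Rr" and bounded: "\<And>x. x \<in> I \<Longrightarrow> v' x \<le> A"
  obtains w w' where "integral_sol Rr w w'" and "\<And>x. x \<in> I \<Longrightarrow> w x = v x" and "0 < w' Rr"
proof -
  have Rr: "0 < Rr" using R_pos R by simp
  have I: "I = {0..<Rr}" using I_eq[OF R] .
  obtain a where a: "0 < a" and lim: "(v' \<longlongrightarrow> a) (at_left Rr)"
    using v'_tendsto_at_R_if_bounded[OF R bounded] by blast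
  define w' where "w' x = (if x < Rr then v' x else a)" for x
  define w where "w x = (if x < Rr then v x else v0 + integral {0..Rr} w')" for x
  have w'_cont: "continuous_on {0..Rr} w'"
    unfolding w'_def[abs_def] using v'_cont I lim Rr by (intro continuous_on_extend_at_left) auto
  have w'_nonneg: "0 \<le> w' x" if "x \<in> {0..Rr}" for x using that v'_nonneg a I by (auto simp: w'_def)
  have w_eq: "w x = v0 + integral {0..x} w'" if x: "x \<in> {0..Rr}" for x
  proof (cases "x < Rr")
    case True
    have "integral {0..x} w' = integral {0..x} v'" by (rule integral_cong) (use True in \<open>auto simp: w'_def\<close>)
    then show ?thesis using v_eq_integral[of x] x True I by (simp add: w_def)
  qed (use x in \<open>simp add: w_def\<close>)
  have rhs_int: "rhs w w' integrable_on {0..Rr}"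
    using continuous_on_rhs[OF w'_cont w'_nonneg w_eq] by (rule integrable_continuous_real)
  have "rhs w w' y = rhs v v' y" if "y < Rr" for y using that by (simp add: rhs_def w_def w'_def)
  then have Phi_eq: "Phi y = integral {0..y} (rhs w w')" if "0 \<le> y" "y < Rr" for y
    using Phi_eq_integral[of y] that I integral_cong[of "{0..y}" "rhs w w'" "rhs v v'"] by simp
  have flux_eq: "x ^ (n - 1) * w' x powr (p - 1) = integral {0..x} (rhs w w')" if x: "x \<in> {0..Rr}" for x
  proof (cases "x < Rr")
    case True
    then show ?thesis using Phi_eq[of x] x by (simp add: Phi_def w'_def)
  next
    case False
    have "(Phi \<longlongrightarrow> Rr ^ (n - 1) * a powr (p - 1)) (at_left Rr)"
      unfolding Phi_def[abs_def] using a by (intro tendsto_intros lim) auto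
    then have "integral {0..Rr} (rhs w w') = Rr ^ (n - 1) * a powr (p - 1)"
      using integral_eq_left_limit[OF Rr rhs_int] Phi_eq by blast
    then show ?thesis using False x by (simp add: w'_def)
  qed
  have "integral_sol Rr w w'"
    unfolding integral_sol_def using w'_cont w'_nonneg w_eq flux_eq v'_0 Rr by (simp add: w'_def)
  moreover have "w x = v x" if "x \<in> I" for x using that I by (simp add: w_def)
  moreover have "0 < w' Rr" using a by (simp add: w'_def)
  ultimately show ?thesis by (rule that)
qed

lemma v'_tendsto_top_if_maximal:
  assumes max: "is_max_sol p n f g v0 R v v'" and R: "R = ereal Rr"
  shows "filterlim v' at_top (at_left Rr)"
proof (rule ccontr)
  have Rr: "0 < Rr" using R_pos R by simp
  assume "\<not> filterlim v' at_top (at_left Rr)"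
  then have "\<not> (\<forall>M. \<exists>x\<in>{0..<Rr}. M < v' x)"
    using filterlim_at_top_at_left_iff_unbounded[OF Rr mono_on_v'[OF R]] by simp
  then obtain A where "\<forall>x\<in>{0..<Rr}. v' x \<le> A" by (auto simp: not_less)
  then have "\<And>x. x \<in> I \<Longrightarrow> v' x \<le> A" using I_eq[OF R] by auto
  then obtain w w' where sol_R: "integral_sol Rr w w'" and w: "\<And>x. x \<in> I \<Longrightarrow> w x = v x"
    and w'_pos: "0 < w' Rr"
    using integral_sol_at_R[OF R] by blast
  obtain T' w2 w2' where T': "Rr < T'" and sol_T': "integral_sol T' w2 w2'"
    and w2: "\<And>x. x \<in> {0..Rr} \<Longrightarrow> w2 x = w x"
    using integral_sol_continuation[OF Rr sol_R w'_pos] by blast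
  have "is_sol p n f g v0 (ereal T') w2 w2'"
    using is_sol_if_integral_sol[OF _ sol_T'] T' Rr by simp
  moreover have "R < ereal T'" using R T' by simp
  moreover have "\<forall>r\<in>I. w2 r = v r" using w w2 I_eq[OF R] by auto
  ultimately show False using max unfolding is_max_sol_def by blast
qed

end

theorem lemma3p2:
  fixes p v0 :: real and n :: nat and f g v v' :: "real \<Rightarrow> real" and R :: ereal
  assumes p: "1 < p" and n: "n \<ge> 1"
    and f_cont: "continuous_on {0..} f" and f_mono: "strict_mono_on {0..} f" and f0: "f 0 = 0"
    and g_lip: "\<forall>T\<ge>0. \<exists>L. L-lipschitz_on {0..T} g"
    and g_mono: "strict_mono_on {0..} g" and g0: "g 0 = 0"
    and growth: "(\<integral>\<^sup>+ s\<in>{1..}. ennreal (1 / (prim f s) powr (1 / p)) \<partial>lborel) < \<infinity>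
               \<or> (\<integral>\<^sup>+ s\<in>{1..}. ennreal (s powr (p - 2) / g s) \<partial>lborel) < \<infinity>"
    and v0: "v0 > 0"
    and sol: "is_max_sol p n f g v0 R v v'"
  shows "0 < R \<and> R < \<infinity> \<and> filterlim v' at_top (at_left (real_of_ereal R))
         \<and> (filterlim v at_top (at_left (real_of_ereal R)) \<longleftrightarrow>
            (\<integral>\<^sup>+ s\<in>{1..}. ennreal (s powr (p - 1) / g s) \<partial>lborel) = \<infinity>)"
proof -
  note max_sol = sol
  interpret radial_solution p v0 n f g v v' R
    using p n f_cont f_mono f0 continuous_on_Ici_if_lipschitz_on_Icc[OF g_lip] g_mono g0 v0 sol
    by unfold_locales (auto simp: is_max_sol_def)
  have "R \<noteq> \<infinity>" using growth R_finite_if_F_growth R_finite_if_g_growth by blast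
  then obtain Rr where R: "R = ereal Rr" and Rr: "0 < Rr" using R_pos by (cases R) auto
  have v'_lim: "filterlim v' at_top (at_left Rr)" by (rule v'_tendsto_top_if_maximal[OF max_sol R])
  have "filterlim v at_top (at_left Rr) \<longleftrightarrow> (\<forall>M. \<exists>x\<in>I. M < v x)"
    using filterlim_at_top_at_left_iff_unbounded[OF Rr mono_on_v[OF R]] I_eq[OF R] by simp
  also have "\<dots> \<longleftrightarrow> (\<integral>\<^sup>+ s\<in>{1..}. ennreal (s powr (p - 1) / g s) \<partial>lborel) = \<infinity>"
  proof
    assume unbounded: "\<forall>M. \<exists>x\<in>I. M < v x"
    show "(\<integral>\<^sup>+ s\<in>{1..}. ennreal (s powr (p - 1) / g s) \<partial>lborel) = \<infinity>"
    proof (rule ccontr)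
      assume "(\<integral>\<^sup>+ s\<in>{1..}. ennreal (s powr (p - 1) / g s) \<partial>lborel) \<noteq> \<infinity>"
      then obtain M where "\<forall>x\<in>I. v x \<le> M"
        using v_bounded_if_g_integrable[OF R v'_lim] by (auto simp: less_top)
      then show False using unbounded by (meson not_le)
    qed
  qed (use v_unbounded_if_g_not_integrable[OF R v'_lim] in blast)
  finally show ?thesis using R Rr v'_lim by simp
qed

end
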